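(* Let $F$ be a connected compact simple Lie group, $m\ge 2$, and consider the $F^m$-invariant metric on $F^m/\mathrm{diag}(F)$ defined by the inner product $(\cdot,\cdot)$ on $\mathfrak g_m=\mathfrak f\oplus\cdots\oplus\mathfrak f\oplus 0$ given by $\big((x_1,\dots,x_{m-1},0)\otimes Z,(x_1,\dots,x_{m-1},0)\otimes Z\big)=f(x_1,\dots,x_{m-1})\langle Z,Z\rangle$ for all $x_i\in\mathbb R$, $Z\in\mathfrak f$, where $f(x)=\sum_{i,j=1}^{m-1}a_{ij}x_ix_j$ ($a_{ij}=a_{ji}$) is a positive definite quadratic form. The metric is naturally reductive if and only if one of the following holds: (a) $a_{ii}>0$ for all $i$ and $a_{ij}=0$ for $i\neq j$; (b) there is $k\in\{1,\dots,m-1\}$ such that $-a_{ik}=a_{ii}>0$ for all $i\neq k$, $a_{ij}=0$ whenever $i,j,k$ are pairwise distinct, and $a_{kk}>\sum_{i\neq k}a_{ii}$; (c) $a_{ij}=\delta_{ij}\alpha_i-\frac{\alpha_i\alpha_j}{S}$ for $i,j=1,\dots,m-1$, where $\alpha_1,\dots,\alpha_m\in\mathbb R\setminus\{0\}$, $S=\sum_{i=1}^m\alpha_i$, and either $\alpha_i>0$ for all $i=1,\dots,m$, or exactly one $\alpha_i$ is negative and $S<0$.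
   Context: $F$ is a connected compact simple Lie group with Lie algebra $\mathfrak f$; $\mathfrak g=m\mathfrak f$, $\mathfrak h=\mathrm{diag}(\mathfrak f)$. $\langle\cdot,\cdot\rangle$ is minus the Killing form. For $a=(a_1,\dots,a_m)\in\mathbb R^m$ and $X\in\mathfrak f$, $a\otimes X$ denotes $(a_1X,\dots,a_mX)\in\mathfrak g$. $\mathfrak g_m$ is the ideal of $\mathfrak g$ with zero in the last copy of $\mathfrak f$; it is an $\mathrm{Ad}(\mathrm{diag}(F))$-invariant complement of $\mathfrak h$, and $F^m$-invariant metrics on $F^m/\mathrm{diag}(F)$ correspond to $\mathrm{Ad}(\mathrm{diag}(F))$-invariant inner products on it. A metric is naturally reductive if some $\mathrm{Ad}(H)$-invariant complement $\mathfrak p$ of $\mathfrak h$ and the corresponding inner product $(\cdot,\cdot)$ on $\mathfrak p$ satisfy $([X,Y]_{\mathfrak p},X)=0$ for all $X,Y\in\mathfrak p$. *)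

theory Defs
  imports "HOL-Analysis.Analysis"
begin

(* The Lie algebra f of F is modelled as a finite-dimensional real vector space 'v
   (class euclidean_space) with a bracket br. *)

definition killing :: "('v::euclidean_space \<Rightarrow> 'v \<Rightarrow> 'v) \<Rightarrow> 'v \<Rightarrow> 'v \<Rightarrow> real" where
  "killing br X Y = (\<Sum>b\<in>Basis. (br X (br Y b)) \<bullet> b)"

definition lie_algebra :: "('v::euclidean_space \<Rightarrow> 'v \<Rightarrow> 'v) \<Rightarrow> bool" where
  "lie_algebra br \<longleftrightarrow> bilinear br \<and> (\<forall>X. br X X = 0) \<and>
     (\<forall>X Y Z. br X (br Y Z) + br Y (br Z X) + br Z (br X Y) = 0)"

definition simple_lie_algebra :: "('v::euclidean_space \<Rightarrow> 'v \<Rightarrow> 'v) \<Rightarrow> bool" where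
  "simple_lie_algebra br \<longleftrightarrow> lie_algebra br \<and> (\<exists>X Y. br X Y \<noteq> 0) \<and>
     (\<forall>I. subspace I \<and> (\<forall>X\<in>I. \<forall>Y. br Y X \<in> I) \<longrightarrow> I = {0} \<or> I = UNIV)"

(* compact semisimple <-> Killing form negative definite *)
definition compact_simple_lie_algebra :: "('v::euclidean_space \<Rightarrow> 'v \<Rightarrow> 'v) \<Rightarrow> bool" where
  "compact_simple_lie_algebra br \<longleftrightarrow> simple_lie_algebra br \<and> (\<forall>X. X \<noteq> 0 \<longrightarrow> killing br X X < 0)"

(* g = m f : elements are X :: nat => 'v, with components X 1, ..., X m, zero elsewhere *)
definition gset :: "nat \<Rightarrow> (nat \<Rightarrow> 'v::real_vector) set" where
  "gset m = {X. \<forall>i. i \<notin> {1..m} \<longrightarrow> X i = 0}"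

definition hset :: "nat \<Rightarrow> (nat \<Rightarrow> 'v::real_vector) set" where
  "hset m = {X \<in> gset m. \<exists>Z. \<forall>i\<in>{1..m}. X i = Z}"

definition gmset :: "nat \<Rightarrow> (nat \<Rightarrow> 'v::real_vector) set" where
  "gmset m = {X \<in> gset m. X m = 0}"

definition gbr :: "('v \<Rightarrow> 'v \<Rightarrow> 'v) \<Rightarrow> (nat \<Rightarrow> 'v) \<Rightarrow> (nat \<Rightarrow> 'v) \<Rightarrow> nat \<Rightarrow> 'v" where
  "gbr br X Y = (\<lambda>i. br (X i) (Y i))"

definition is_subspace_g :: "nat \<Rightarrow> (nat \<Rightarrow> 'v::real_vector) set \<Rightarrow> bool" where
  "is_subspace_g m P \<longleftrightarrow> P \<subseteq> gset m \<and> (\<lambda>i. 0) \<in> P \<and>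
     (\<forall>X\<in>P. \<forall>Y\<in>P. (\<lambda>i. X i + Y i) \<in> P) \<and> (\<forall>c. \<forall>X\<in>P. (\<lambda>i. c *\<^sub>R X i) \<in> P)"

definition is_complement_h :: "nat \<Rightarrow> (nat \<Rightarrow> 'v::real_vector) set \<Rightarrow> bool" where
  "is_complement_h m P \<longleftrightarrow> is_subspace_g m P \<and> P \<inter> hset m = {\<lambda>i. 0} \<and>
     (\<forall>X\<in>gset m. \<exists>Y\<in>P. \<exists>W\<in>hset m. X = (\<lambda>i. Y i + W i))"

(* invariance under Ad(H), H = diag(F) connected, i.e. under ad(h) *)
definition h_invariant :: "('v::real_vector \<Rightarrow> 'v \<Rightarrow> 'v) \<Rightarrow> nat \<Rightarrow> (nat \<Rightarrow> 'v) set \<Rightarrow> bool" where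
  "h_invariant br m P \<longleftrightarrow> (\<forall>W\<in>hset m. \<forall>X\<in>P. gbr br W X \<in> P)"

definition proj_p :: "nat \<Rightarrow> (nat \<Rightarrow> 'v::real_vector) set \<Rightarrow> (nat \<Rightarrow> 'v) \<Rightarrow> nat \<Rightarrow> 'v" where
  "proj_p m P V = (THE Y. Y \<in> P \<and> (\<lambda>i. V i - Y i) \<in> hset m)"

(* projection g -> g_m along h  (identifies any complement p with g_m = g/h) *)
definition proj_gm :: "nat \<Rightarrow> (nat \<Rightarrow> 'v::real_vector) \<Rightarrow> nat \<Rightarrow> 'v" where
  "proj_gm m X = (\<lambda>i. if i \<in> {1..<m} then X i - X m else 0)"

(* inner product on g_m: ((x (x) Z),(y (x) W)) = sum a_ij x_i y_j <Z,W>,  <,> = - Killing *)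
definition Qform :: "('v::euclidean_space \<Rightarrow> 'v \<Rightarrow> 'v) \<Rightarrow> (nat \<Rightarrow> nat \<Rightarrow> real) \<Rightarrow> nat
     \<Rightarrow> (nat \<Rightarrow> 'v) \<Rightarrow> (nat \<Rightarrow> 'v) \<Rightarrow> real" where
  "Qform br a m X Y = (\<Sum>i\<in>{1..<m}. \<Sum>j\<in>{1..<m}. a i j * (- killing br (X i) (Y j)))"

definition naturally_reductive :: "('v::euclidean_space \<Rightarrow> 'v \<Rightarrow> 'v) \<Rightarrow> (nat \<Rightarrow> nat \<Rightarrow> real) \<Rightarrow> nat \<Rightarrow> bool" where
  "naturally_reductive br a m \<longleftrightarrow> (\<exists>P. is_complement_h m P \<and> h_invariant br m P \<and>
     (\<forall>X\<in>P. \<forall>Y\<in>P. Qform br a m (proj_gm m (proj_p m P (gbr br X Y))) (proj_gm m X) = 0))"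

end

theory Submission
  imports Defs
begin

text \<open>Every \<open>Ad(diag F)\<close>-invariant complement of \<open>h\<close> contains all \<open>x \<otimes> Z\<close> with
  \<open>x \<bottom> \<mu>\<close> for some weights \<open>\<mu>\<close> with \<open>\<Sigma>\<mu> \<noteq> 0\<close>: its components are \<open>ad\<close>-equivariant maps, hence scalars
  by Schur's lemma. Encode the metric by the symmetric \<open>m \<times> m\<close> matrix \<open>G\<close> with zero row sums
  extending \<open>(a\<^sub>i\<^sub>j)\<close>. Testing natural reductivity on \<open>X = u \<otimes> A + v \<otimes> [A,B]\<close>, \<open>Y = w \<otimes> B\<close>
  turns it into the symmetry \<open>T(u,w,v) = T(v,w,u)\<close> of the cubic form
  \<open>T(u,w,v) = \<Sigma> G\<^sub>p\<^sub>q u\<^sub>p w\<^sub>p v\<^sub>q\<close> on \<open>\<mu>\<^sup>\<bottom>\<close>. If some weight vanishes this forces \<open>G\<close> to be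
  star-shaped (off-diagonal entries vanish away from one index \<open>k\<close>), giving (a) for \<open>k = m\<close> and (b)
  otherwise; if no weight vanishes it forces \<open>G = diag(\<alpha>) - \<alpha>\<alpha>\<^sup>T/\<Sigma>\<alpha>\<close>, giving (c), whose sign
  conditions are exactly positivity of \<open>G\<close>. Conversely, in these cases the complements \<open>x\<^sub>k = 0\<close>,
  resp. \<open>\<Sigma> \<alpha>\<^sub>r X\<^sub>r = 0\<close>, are naturally reductive.\<close>

section \<open>Linear algebra\<close>

lemma sum_eq_single_term:
  fixes f :: "'a \<Rightarrow> 'b::comm_monoid_add"
  assumes "finite I" "i \<in> I" "\<forall>p\<in>I. p \<noteq> i \<longrightarrow> f p = 0"
  shows "sum f I = f i"
  using assms by (subst sum.mono_neutral_right[of I "{i}"]) auto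

lemma sum_eq_two_terms:
  fixes f :: "'a \<Rightarrow> 'b::comm_monoid_add"
  assumes "finite I" "i \<in> I" "j \<in> I" "i \<noteq> j" "\<forall>p\<in>I. p \<noteq> i \<longrightarrow> p \<noteq> j \<longrightarrow> f p = 0"
  shows "sum f I = f i + f j"
  using assms by (subst sum.mono_neutral_right[of I "{i, j}"]) auto

lemma sum_eq_three_terms:
  fixes f :: "'a \<Rightarrow> 'b::comm_monoid_add"
  assumes "finite I" "i \<in> I" "j \<in> I" "l \<in> I" "i \<noteq> j" "i \<noteq> l" "j \<noteq> l"
    "\<forall>p\<in>I. p \<noteq> i \<longrightarrow> p \<noteq> j \<longrightarrow> p \<noteq> l \<longrightarrow> f p = 0"
  shows "sum f I = f i + f j + f l"
  using assms by (subst sum.mono_neutral_right[of I "{i, j, l}"]) (auto simp: add.assoc)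

lemma linear_inner_Basis_expansion:
  fixes f :: "'v::euclidean_space \<Rightarrow> 'v"
  assumes "linear f"
  shows "f x \<bullet> b = (\<Sum>c\<in>Basis. (x \<bullet> c) * (f c \<bullet> b))"
proof -
  have "f x = f (\<Sum>c\<in>Basis. (x \<bullet> c) *\<^sub>R c)"
    by (simp add: euclidean_representation)
  also have "\<dots> = (\<Sum>c\<in>Basis. (x \<bullet> c) *\<^sub>R f c)"
    by (simp add: linear_sum[OF assms] linear_scale[OF assms])
  finally show ?thesis by (simp add: inner_sum_left)
qed

definition trace_op :: "('v::euclidean_space \<Rightarrow> 'v) \<Rightarrow> real" where
  "trace_op f = (\<Sum>b\<in>Basis. f b \<bullet> b)"

lemma trace_op_comp_commute:
  fixes f g :: "'v::euclidean_space \<Rightarrow> 'v"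
  assumes "linear f" "linear g"
  shows "trace_op (\<lambda>x. f (g x)) = trace_op (\<lambda>x. g (f x))"
proof -
  have "trace_op (\<lambda>x. f (g x)) = (\<Sum>b\<in>Basis. \<Sum>c\<in>Basis. (g b \<bullet> c) * (f c \<bullet> b))"
    unfolding trace_op_def by (intro sum.cong refl linear_inner_Basis_expansion[OF assms(1)])
  also have "\<dots> = (\<Sum>c\<in>Basis. \<Sum>b\<in>Basis. (f c \<bullet> b) * (g b \<bullet> c))"
    by (subst sum.swap) (simp add: mult.commute)
  also have "\<dots> = trace_op (\<lambda>x. g (f x))"
    unfolding trace_op_def by (intro sum.cong refl linear_inner_Basis_expansion[OF assms(2), symmetric])
  finally show ?thesis .
qed

lemma trace_op_diff: "trace_op (\<lambda>x. f x - g x) = trace_op f - trace_op g"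
  unfolding trace_op_def by (simp add: inner_diff_left sum_subtractf)

lemma trace_op_add: "trace_op (\<lambda>x. f x + g x) = trace_op f + trace_op g"
  unfolding trace_op_def by (simp add: inner_add_left sum.distrib)

lemma trace_op_scaleR: "trace_op (\<lambda>x. c *\<^sub>R f x) = c * trace_op f"
  unfolding trace_op_def by (simp add: sum_distrib_left)

lemma quadratic_nonpos_imp_linear_coeff_zero:
  fixes a c :: real
  assumes "\<And>t. 2 * t * a + t\<^sup>2 * c \<le> 0"
  shows "a = 0"
proof (rule ccontr)
  assume "a \<noteq> 0"
  define d where "d = \<bar>c\<bar> + 1"
  have d: "d > 0" "2 * d + c > 0" unfolding d_def by (auto simp: abs_if)
  have "2 * (a / d) * a + (a / d)\<^sup>2 * c = a\<^sup>2 * (2 * d + c) / d\<^sup>2"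
    using d by (simp add: field_simps power2_eq_square)
  also have "\<dots> > 0"
    using \<open>a \<noteq> 0\<close> d by (intro divide_pos_pos mult_pos_pos) auto
  finally show False using assms[of "a / d"] by simp
qed

lemma Rayleigh_quotient_max:
  fixes T :: "'v::euclidean_space \<Rightarrow> 'v" and b :: "'v \<Rightarrow> 'v \<Rightarrow> real"
  assumes T: "linear T" and b: "bilinear b" and pos: "\<And>x. x \<noteq> 0 \<Longrightarrow> b x x > 0"
  obtains x0 l where "x0 \<noteq> 0" "b (T x0) x0 = l * b x0 x0" "\<And>z. b (T z) z \<le> l * b z z"
proof -
  have cont: "continuous_on S (\<lambda>x. b (f x) x)" if "linear f" for f S
    by (intro bilinear_continuous_on_compose[OF _ continuous_on_id b]
        linear_continuous_on[OF that[unfolded linear_conv_bounded_linear]])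
  have "b x x \<noteq> 0" if "x \<in> sphere 0 1" for x
    using pos[of x] that by (cases "x = 0") auto
  then have "continuous_on (sphere (0::'v) 1) (\<lambda>x. b (T x) x / b x x)"
    by (intro continuous_intros cont T linear_id[unfolded id_def]) auto
  then have "\<exists>x0\<in>sphere 0 1. \<forall>y\<in>sphere 0 1. b (T y) y / b y y \<le> b (T x0) x0 / b x0 x0"
    by (intro continuous_attains_sup compact_sphere) simp_all
  then obtain x0 where x0: "x0 \<in> sphere 0 1"
    and max: "\<forall>y\<in>sphere 0 1. b (T y) y / b y y \<le> b (T x0) x0 / b x0 x0" ..
  define l where "l = b (T x0) x0 / b x0 x0"
  have "x0 \<noteq> 0" using x0 by auto
  show thesis
  proof (rule that)
    show "x0 \<noteq> 0" by fact
    show "b (T x0) x0 = l * b x0 x0" unfolding l_def using pos[OF \<open>x0 \<noteq> 0\<close>] by simp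
    show "b (T z) z \<le> l * b z z" for z
    proof (cases "z = 0")
      case True then show ?thesis
        using bilinear_lzero[OF b] linear_0[OF T] by simp
    next
      case False
      define c where "c = inverse (norm z)"
      have c: "c > 0" "c *\<^sub>R z \<in> sphere 0 1" using False unfolding c_def by (auto simp: norm_scaleR)
      have hom: "b (T (c *\<^sub>R x)) (c *\<^sub>R x) = c\<^sup>2 * b (T x) x" "b (c *\<^sub>R x) (c *\<^sub>R x) = c\<^sup>2 * b x x" for x
        using linear_scale[OF T] bilinear_lmul[OF b] bilinear_rmul[OF b] by (simp_all add: power2_eq_square)
      have "b (T (c *\<^sub>R z)) (c *\<^sub>R z) / b (c *\<^sub>R z) (c *\<^sub>R z) \<le> l"
        unfolding l_def by (rule bspec[OF max c(2)])
      then have "b (T z) z / b z z \<le> l" using c(1) unfolding hom by simp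
      then show ?thesis using pos[OF False] by (simp add: divide_le_eq)
    qed
  qed
qed

lemma self_adjoint_has_eigenvector:
  fixes T :: "'v::euclidean_space \<Rightarrow> 'v" and b :: "'v \<Rightarrow> 'v \<Rightarrow> real"
  assumes T: "linear T" and b: "bilinear b" and sym: "\<And>x y. b x y = b y x"
    and pos: "\<And>x. x \<noteq> 0 \<Longrightarrow> b x x > 0" and adj: "\<And>x y. b (T x) y = b x (T y)"
  shows "\<exists>x l. x \<noteq> 0 \<and> T x = l *\<^sub>R x"
proof -
  obtain x0 l where x0: "x0 \<noteq> 0" "b (T x0) x0 = l * b x0 x0" and max: "\<And>z. b (T z) z \<le> l * b z z"
    using Rayleigh_quotient_max[OF T b pos] by blast
  define d where "d = T x0 - l *\<^sub>R x0"
  note bl = bilinear_ladd[OF b] bilinear_radd[OF b] bilinear_lmul[OF b] bilinear_rmul[OF b]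
    linear_add[OF T] linear_scale[OF T]
  have bd: "b (T x0) d - l * b x0 d = b d d"
    unfolding d_def by (simp add: bilinear_lsub[OF b] bilinear_lmul[OF b])
  have "2 * t * b d d + t\<^sup>2 * (b (T d) d - l * b d d) \<le> 0" for t
  proof -
    have "b (T (x0 + t *\<^sub>R d)) (x0 + t *\<^sub>R d)
        = b (T x0) x0 + t * (b (T x0) d + b (T d) x0) + t\<^sup>2 * b (T d) d"
      using bl by (simp add: power2_eq_square algebra_simps)
    moreover have "b (x0 + t *\<^sub>R d) (x0 + t *\<^sub>R d) = b x0 x0 + t * (b x0 d + b d x0) + t\<^sup>2 * b d d"
      using bl by (simp add: power2_eq_square algebra_simps)
    moreover have "b (T d) x0 = b (T x0) d" "b d x0 = b x0 d"
      using adj[of d x0] sym[of d "T x0"] sym[of d x0] by simp_all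
    ultimately show ?thesis
      using max[of "x0 + t *\<^sub>R d"] x0(2) bd by (simp add: algebra_simps)
  qed
  then have "b d d = 0" by (rule quadratic_nonpos_imp_linear_coeff_zero)
  then have "d = 0" using pos by force
  then show ?thesis using x0(1) unfolding d_def by auto
qed

section \<open>Compact simple Lie algebras\<close>

locale compact_simple_lie =
  fixes br :: "'v::euclidean_space \<Rightarrow> 'v \<Rightarrow> 'v"
  assumes compact_simple: "compact_simple_lie_algebra br"
begin

lemma bracket_bilinear: "bilinear br"
  and bracket_self: "br X X = 0"
  and jacobi: "br X (br Y Z) + br Y (br Z X) + br Z (br X Y) = 0"
  and ideal_trivial: "subspace I \<Longrightarrow> \<forall>X\<in>I. \<forall>Y. br Y X \<in> I \<Longrightarrow> I = {0} \<or> I = UNIV"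
  and nonabelian: "\<exists>X Y. br X Y \<noteq> 0"
  and killing_neg: "X \<noteq> 0 \<Longrightarrow> killing br X X < 0"
  using compact_simple
  unfolding compact_simple_lie_algebra_def simple_lie_algebra_def lie_algebra_def by blast+

lemma linear_bracket_right: "linear (br X)"
  using bracket_bilinear unfolding bilinear_def by blast

lemmas bracket_add = bilinear_ladd[OF bracket_bilinear] bilinear_radd[OF bracket_bilinear]
lemmas bracket_diff = bilinear_lsub[OF bracket_bilinear] bilinear_rsub[OF bracket_bilinear]
lemmas bracket_scaleR = bilinear_lmul[OF bracket_bilinear] bilinear_rmul[OF bracket_bilinear]
lemmas bracket_zero = bilinear_lzero[OF bracket_bilinear] bilinear_rzero[OF bracket_bilinear]

lemma bracket_antisym: "br X Y = - br Y X"
proof -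
  have "br (X + Y) (X + Y) = br X X + br X Y + (br Y X + br Y Y)" by (simp add: bracket_add)
  then have "br X Y + br Y X = 0" by (simp add: bracket_self)
  then show ?thesis by (simp add: eq_neg_iff_add_eq_0)
qed

lemma bracket_bracket_left: "br (br X Y) Z = br X (br Y Z) - br Y (br X Z)"
proof -
  have "- (br X (br Y Z) + br Y (br Z X)) = br Z (br X Y)"
    by (simp only: neg_eq_iff_add_eq_0 jacobi)
  moreover have "br (br X Y) Z = - br Z (br X Y)" "br Y (br X Z) = - br Y (br Z X)"
    using bracket_antisym[of "br X Y" Z] bracket_antisym[of X Z] bilinear_rneg[OF bracket_bilinear]
    by simp_all
  ultimately show ?thesis by (metis diff_minus_eq_add minus_minus)
qed

lemma linear_bracket_bracket: "linear (\<lambda>Z. br X (br Y Z))"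
  using linear_compose[OF linear_bracket_right linear_bracket_right] by (simp add: o_def)

lemma killing_eq_trace: "killing br X Y = trace_op (\<lambda>Z. br X (br Y Z))"
  unfolding killing_def trace_op_def by simp

lemma killing_sym: "killing br X Y = killing br Y X"
  unfolding killing_eq_trace by (rule trace_op_comp_commute[OF linear_bracket_right linear_bracket_right])

lemma killing_bracket_left: "killing br (br A B) C = - killing br B (br A C)"
proof -
  have "killing br (br A B) C = trace_op (\<lambda>Z. br A (br B (br C Z))) - trace_op (\<lambda>Z. br B (br A (br C Z)))"
    unfolding killing_eq_trace bracket_bracket_left by (rule trace_op_diff)
  moreover have "killing br B (br A C) = trace_op (\<lambda>Z. br B (br A (br C Z))) - trace_op (\<lambda>Z. br B (br C (br A Z)))"
    unfolding killing_eq_trace bracket_bracket_left bracket_diff by (rule trace_op_diff)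
  moreover have "trace_op (\<lambda>Z. br A (br B (br C Z))) = trace_op (\<lambda>Z. br B (br C (br A Z)))"
    by (rule trace_op_comp_commute[OF linear_bracket_right linear_bracket_bracket])
  ultimately show ?thesis by simp
qed

lemma killing_bilinear: "bilinear (killing br)"
proof -
  have left: "linear (\<lambda>X. killing br X Y)" for Y
  proof (rule linearI)
    show "killing br (X1 + X2) Y = killing br X1 Y + killing br X2 Y" for X1 X2
      unfolding killing_eq_trace bracket_add by (rule trace_op_add)
    show "killing br (c *\<^sub>R X) Y = c *\<^sub>R killing br X Y" for c X
      unfolding killing_eq_trace bracket_scaleR by (simp add: trace_op_scaleR)
  qed
  moreover have "linear (\<lambda>Y. killing br X Y)" for X
    using left[of X] by (subst killing_sym) simp
  ultimately show ?thesis unfolding bilinear_def by blast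
qed

definition kform :: "'v \<Rightarrow> 'v \<Rightarrow> real" where
  "kform X Y = - killing br X Y"

lemma kform_bilinear: "bilinear kform"
proof -
  have "bilinear (\<lambda>X Y. - killing br X Y)"
    using killing_bilinear unfolding bilinear_def
    by (auto intro!: linear_compose_neg[unfolded o_def])
  then show ?thesis unfolding kform_def[abs_def] .
qed

lemma kform_sym: "kform X Y = kform Y X"
  unfolding kform_def using killing_sym by simp

lemma kform_pos: "X \<noteq> 0 \<Longrightarrow> kform X X > 0"
  unfolding kform_def using killing_neg by force

lemma kform_bracket_left: "kform (br A B) C = - kform B (br A C)"
  unfolding kform_def using killing_bracket_left by simp

lemma kform_bracket_self: "kform (br A B) A = 0"
  using kform_bracket_left[of A B A] bracket_self bilinear_rzero[OF kform_bilinear] by simp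

lemma kform_bracket_swap: "kform (br A B) C = - kform (br C B) A"
proof -
  have "kform (br C B) A = - kform B (br C A)" by (rule kform_bracket_left)
  also have "br C A = - br A C" by (rule bracket_antisym)
  finally have "kform (br C B) A = kform B (br A C)" using bilinear_rneg[OF kform_bilinear] by simp
  then show ?thesis using kform_bracket_left[of A B C] by simp
qed

lemma kform_diff_diff: "kform (A - B) (C - D) = kform A C - kform A D - kform B C + kform B D"
proof -
  have "kform (A - B) (C - D) = (kform A C - kform A D) - (kform B C - kform B D)"
    by (simp add: bilinear_lsub[OF kform_bilinear] bilinear_rsub[OF kform_bilinear])
  then show ?thesis by simp
qed

lemma kform_bracket_combination:
  "kform (p *\<^sub>R br A B + p' *\<^sub>R br A' B) (q *\<^sub>R A + q' *\<^sub>R A') = (p * q' - p' * q) * kform (br A B) A'"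
proof -
  have "kform (p *\<^sub>R br A B + p' *\<^sub>R br A' B) (q *\<^sub>R A + q' *\<^sub>R A')
      = p * q * kform (br A B) A + p * q' * kform (br A B) A' + p' * q * kform (br A' B) A
        + p' * q' * kform (br A' B) A'"
    using bilinear_ladd[OF kform_bilinear] bilinear_radd[OF kform_bilinear]
      bilinear_lmul[OF kform_bilinear] bilinear_rmul[OF kform_bilinear]
    by (simp add: algebra_simps)
  moreover have "kform (br A' B) A = - kform (br A B) A'" using kform_bracket_swap[of A' B A] by simp
  ultimately show ?thesis by (simp add: kform_bracket_self algebra_simps)
qed

text \<open>Schur's lemma. An \<open>ad\<close>-equivariant map is \<open>kform\<close>-self-adjoint, hence has an eigenvector;
  its eigenspace is a nonzero ideal and therefore everything.\<close>

lemma equivariant_map_is_scalar: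
  assumes T: "linear T" and equiv: "\<And>Y Z. T (br Y Z) = br Y (T Z)"
  shows "\<exists>c. \<forall>Z. T Z = c *\<^sub>R Z"
proof -
  have equiv_left: "br (T X) Z = T (br X Z)" for X Z
  proof -
    have "br (T X) Z = - T (br Z X)" using bracket_antisym[of "T X" Z] by (simp add: equiv)
    then show ?thesis using bracket_antisym[of Z X] linear_neg[OF T] by simp
  qed
  have "kform (T X) Y = kform X (T Y)" for X Y
    unfolding kform_def killing_eq_trace equiv_left equiv by simp
  then obtain X0 l where X0: "X0 \<noteq> 0" "T X0 = l *\<^sub>R X0"
    using self_adjoint_has_eigenvector[OF T kform_bilinear kform_sym kform_pos] by blast
  define I where "I = {Z. T Z = l *\<^sub>R Z}"
  have "subspace I" unfolding I_def subspace_def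
    by (auto simp: linear_add[OF T] linear_scale[OF T] linear_0[OF T] scaleR_add_right)
  moreover have "\<forall>X\<in>I. \<forall>Y. br Y X \<in> I" unfolding I_def by (auto simp: equiv bracket_scaleR)
  moreover have "I \<noteq> {0}" using X0 unfolding I_def by blast
  ultimately have "I = UNIV" using ideal_trivial by blast
  then show ?thesis unfolding I_def by blast
qed

end

section \<open>Complements of the diagonal\<close>

definition diagonal :: "nat \<Rightarrow> 'v::real_vector \<Rightarrow> nat \<Rightarrow> 'v" where
  "diagonal m Z = (\<lambda>r. if r \<in> {1..m} then Z else 0)"

definition tensor :: "nat \<Rightarrow> (nat \<Rightarrow> real) \<Rightarrow> 'v::real_vector \<Rightarrow> nat \<Rightarrow> 'v" where
  "tensor m x Z = (\<lambda>r. if r \<in> {1..m} then x r *\<^sub>R Z else 0)"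

definition unit_vec :: "nat \<Rightarrow> nat \<Rightarrow> real" where
  "unit_vec i = (\<lambda>r. if r = i then 1 else 0)"

lemma tensor_cong: "(\<And>r. r \<in> {1..m} \<Longrightarrow> x r = y r) \<Longrightarrow> tensor m x Z = tensor m y Z"
  unfolding tensor_def by auto

lemma tensor_sum: "tensor m (\<lambda>r. \<Sum>i\<in>S. f i r) Z = (\<lambda>r. \<Sum>i\<in>S. tensor m (f i) Z r)"
  unfolding tensor_def by (auto simp: fun_eq_iff scaleR_sum_left intro: sum.neutral)

lemma hset_iff_diagonal: "X \<in> hset m \<longleftrightarrow> (\<exists>Z. X = diagonal m Z)"
proof
  assume "X \<in> hset m"
  then obtain Z where "\<forall>i\<in>{1..m}. X i = Z" "\<forall>i. i \<notin> {1..m} \<longrightarrow> X i = 0"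
    unfolding hset_def gset_def by blast
  then have "X = diagonal m Z" by (auto simp: diagonal_def fun_eq_iff)
  then show "\<exists>Z. X = diagonal m Z" ..
qed (auto simp: hset_def gset_def diagonal_def)

lemma diagonal_diff: "diagonal m Z - diagonal m W = diagonal m (Z - W)"
  unfolding diagonal_def by (auto simp: fun_eq_iff)

lemma is_subspace_g_diff:
  assumes P: "is_subspace_g m P" and X: "X \<in> P" and Y: "Y \<in> P"
  shows "(\<lambda>i. X i - Y i) \<in> P"
proof -
  have add: "\<And>X Y. X \<in> P \<Longrightarrow> Y \<in> P \<Longrightarrow> (\<lambda>i. X i + Y i) \<in> P"
    and scale: "\<And>c X. X \<in> P \<Longrightarrow> (\<lambda>i. c *\<^sub>R X i) \<in> P"
    using P unfolding is_subspace_g_def by auto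
  show ?thesis using add[OF X scale[OF Y, of "-1"]] by simp
qed

lemma is_subspace_g_sum:
  assumes P: "is_subspace_g m P" and "finite S" and "\<forall>i\<in>S. f i \<in> P"
  shows "(\<lambda>r. \<Sum>i\<in>S. f i r) \<in> P"
  using \<open>finite S\<close> \<open>\<forall>i\<in>S. f i \<in> P\<close>
proof (induction S rule: finite_induct)
  case empty then show ?case using P unfolding is_subspace_g_def by simp
next
  case (insert x F)
  have "(\<lambda>r. f x r + (\<Sum>i\<in>F. f i r)) \<in> P"
    using P insert unfolding is_subspace_g_def by simp
  then show ?case using insert by simp
qed

lemma is_complement_h_decomp_unique:
  assumes P: "is_complement_h m P"
    and Y1: "Y1 \<in> P" "(\<lambda>i. V i - Y1 i) \<in> hset m"
    and Y2: "Y2 \<in> P" "(\<lambda>i. V i - Y2 i) \<in> hset m"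
  shows "Y1 = Y2"
proof -
  have "is_subspace_g m P" using P unfolding is_complement_h_def by blast
  then have inP: "(\<lambda>i. Y1 i - Y2 i) \<in> P" using Y1(1) Y2(1) by (rule is_subspace_g_diff)
  obtain Z1 where Z1: "(\<lambda>i. V i - Y1 i) = diagonal m Z1"
    using Y1(2) unfolding hset_iff_diagonal ..
  obtain Z2 where Z2: "(\<lambda>i. V i - Y2 i) = diagonal m Z2"
    using Y2(2) unfolding hset_iff_diagonal ..
  have "(\<lambda>i. Y1 i - Y2 i) = diagonal m (Z2 - Z1)"
    using Z1 Z2 unfolding diagonal_diff[symmetric] by (auto simp: fun_eq_iff algebra_simps)
  then have "(\<lambda>i. Y1 i - Y2 i) \<in> hset m" unfolding hset_iff_diagonal by (rule exI)
  with inP have "(\<lambda>i. Y1 i - Y2 i) \<in> P \<inter> hset m" by (rule IntI)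
  then show ?thesis
    using P unfolding is_complement_h_def by (auto simp: fun_eq_iff)
qed

lemma proj_p_eqI:
  assumes "is_complement_h m P" "Y \<in> P" "(\<lambda>i. V i - Y i) \<in> hset m"
  shows "proj_p m P V = Y"
  unfolding proj_p_def
  using assms is_complement_h_decomp_unique[OF assms(1)] by (intro the_equality) auto

lemma proj_p_decomp:
  assumes P: "is_complement_h m P" and V: "V \<in> gset m"
  shows "proj_p m P V \<in> P" "(\<lambda>i. V i - proj_p m P V i) \<in> hset m"
proof -
  obtain Y W where "Y \<in> P" "W \<in> hset m" "V = (\<lambda>i. Y i + W i)"
    using P V unfolding is_complement_h_def by blast
  moreover from this have "proj_p m P V = Y" by (intro proj_p_eqI[OF P]) auto
  ultimately show "proj_p m P V \<in> P" "(\<lambda>i. V i - proj_p m P V i) \<in> hset m" by auto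
qed

lemma proj_gm_eq_if_diff_in_hset:
  assumes "m \<ge> 1" "(\<lambda>i. V i - Y i) \<in> hset m"
  shows "proj_gm m Y = proj_gm m V"
proof -
  obtain Z where Z: "\<forall>i\<in>{1..m}. V i - Y i = Z"
    using assms(2) unfolding hset_def by blast
  have "Y i - Y m = V i - V m" if "i \<in> {1..<m}" for i
    using Z that assms(1) by (simp add: algebra_simps)
  then show ?thesis unfolding proj_gm_def by auto
qed

definition P_mu :: "nat \<Rightarrow> (nat \<Rightarrow> real) \<Rightarrow> (nat \<Rightarrow> 'v::real_vector) set" where
  "P_mu m \<mu> = {X \<in> gset m. (\<Sum>r\<in>{1..m}. \<mu> r *\<^sub>R X r) = 0}"

lemma is_subspace_g_P_mu: "is_subspace_g m (P_mu m \<mu> :: (nat \<Rightarrow> 'v::real_vector) set)"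
  unfolding is_subspace_g_def
proof (intro conjI ballI allI)
  fix X Y :: "nat \<Rightarrow> 'v" assume X: "X \<in> P_mu m \<mu>" and Y: "Y \<in> P_mu m \<mu>"
  have "(\<Sum>r\<in>{1..m}. \<mu> r *\<^sub>R (X r + Y r)) = (\<Sum>r\<in>{1..m}. \<mu> r *\<^sub>R X r) + (\<Sum>r\<in>{1..m}. \<mu> r *\<^sub>R Y r)"
    by (simp add: scaleR_add_right sum.distrib)
  then show "(\<lambda>i. X i + Y i) \<in> P_mu m \<mu>" using X Y unfolding P_mu_def gset_def by simp
next
  fix c and X :: "nat \<Rightarrow> 'v" assume X: "X \<in> P_mu m \<mu>"
  have "(\<Sum>r\<in>{1..m}. \<mu> r *\<^sub>R (c *\<^sub>R X r)) = c *\<^sub>R (\<Sum>r\<in>{1..m}. \<mu> r *\<^sub>R X r)"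
    by (simp add: scaleR_sum_right mult.commute)
  then show "(\<lambda>i. c *\<^sub>R X i) \<in> P_mu m \<mu>" using X unfolding P_mu_def gset_def by simp
qed (auto simp: P_mu_def gset_def)

lemma is_complement_h_P_mu:
  assumes S: "sum \<mu> {1..m} \<noteq> 0"
  shows "is_complement_h m (P_mu m \<mu> :: (nat \<Rightarrow> 'v::real_vector) set)"
proof -
  have weighted_diagonal: "(\<Sum>r\<in>{1..m}. \<mu> r *\<^sub>R diagonal m Z r) = (\<Sum>r\<in>{1..m}. \<mu> r) *\<^sub>R Z"
    for Z :: 'v
    by (simp add: diagonal_def scaleR_sum_left)
  have "P_mu m \<mu> \<inter> hset m \<subseteq> {\<lambda>i. 0 :: 'v}"
  proof
    fix X :: "nat \<Rightarrow> 'v" assume X: "X \<in> P_mu m \<mu> \<inter> hset m"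
    then have "X \<in> hset m" by blast
    then obtain Z where Z: "X = diagonal m Z" unfolding hset_iff_diagonal by blast
    then have "(\<Sum>r\<in>{1..m}. \<mu> r) *\<^sub>R Z = 0"
      using X unfolding P_mu_def weighted_diagonal[symmetric] by simp
    then show "X \<in> {\<lambda>i. 0}" using S Z by (simp add: diagonal_def fun_eq_iff)
  qed
  moreover have "\<exists>Y\<in>P_mu m \<mu>. \<exists>W\<in>hset m. X = (\<lambda>i. Y i + W i)" if X: "X \<in> gset m" for X :: "nat \<Rightarrow> 'v"
  proof -
    define W where "W = diagonal m (inverse (\<Sum>r\<in>{1..m}. \<mu> r) *\<^sub>R (\<Sum>r\<in>{1..m}. \<mu> r *\<^sub>R X r))"
    have "(\<Sum>r\<in>{1..m}. \<mu> r *\<^sub>R (X r - W r)) = (\<Sum>r\<in>{1..m}. \<mu> r *\<^sub>R X r) - (\<Sum>r\<in>{1..m}. \<mu> r *\<^sub>R W r)"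
      by (simp add: scaleR_diff_right sum_subtractf)
    also have "(\<Sum>r\<in>{1..m}. \<mu> r *\<^sub>R W r) = (\<Sum>r\<in>{1..m}. \<mu> r *\<^sub>R X r)"
      unfolding W_def weighted_diagonal using S by simp
    finally have "(\<Sum>r\<in>{1..m}. \<mu> r *\<^sub>R (X r - W r)) = 0" by simp
    then have "(\<lambda>i. X i - W i) \<in> P_mu m \<mu>"
      using X unfolding P_mu_def gset_def W_def diagonal_def by auto
    moreover have "W \<in> hset m" unfolding W_def hset_iff_diagonal by blast
    ultimately show ?thesis by (intro bexI[of _ "\<lambda>i. X i - W i"] bexI[of _ W]) auto
  qed
  moreover have "(\<lambda>i. 0) \<in> P_mu m \<mu> \<inter> hset m"
    unfolding P_mu_def hset_def gset_def by auto
  ultimately show ?thesis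
    unfolding is_complement_h_def using is_subspace_g_P_mu by (intro conjI) auto
qed

section \<open>The matrix of the metric\<close>

lemma coordinates_from_differences:
  assumes r: "r \<in> {1..m}" and xm: "(\<Sum>i\<in>{1..<m}. (x i - x m) * c i) = x m"
  shows "(\<Sum>i\<in>{1..<m}. (x i - x m) * (unit_vec i r + c i)) = x r"
proof -
  have "(\<Sum>i\<in>{1..<m}. (x i - x m) * (unit_vec i r + c i))
      = (\<Sum>i\<in>{1..<m}. if i = r then x i - x m else 0) + (\<Sum>i\<in>{1..<m}. (x i - x m) * c i)"
    by (simp add: distrib_left sum.distrib unit_vec_def if_distrib[of "\<lambda>t. _ * t"] eq_commute
        cong: if_cong)
  also have "\<dots> = x r" unfolding xm using r by (cases "r = m") auto
  finally show ?thesis .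
qed

definition coord_diff :: "nat \<Rightarrow> nat \<Rightarrow> nat \<Rightarrow> real" where
  "coord_diff m i p = (if p = i then 1 else 0) - (if p = m then 1 else 0)"

text \<open>The matrix, in the coordinates of \<open>\<real>\<^sup>m\<close>, of the quadratic form
  \<open>x \<mapsto> f(x\<^sub>1 - x\<^sub>m, \<dots>, x\<^sub>m\<^sub>-\<^sub>1 - x\<^sub>m)\<close>. It is the unique symmetric extension of
  \<open>(a\<^sub>i\<^sub>j)\<close> with zero row sums, and all three normal forms of the theorem are conditions on it.\<close>

definition lift :: "(nat \<Rightarrow> nat \<Rightarrow> real) \<Rightarrow> nat \<Rightarrow> nat \<Rightarrow> nat \<Rightarrow> real" where
  "lift a m p q = (\<Sum>i\<in>{1..<m}. \<Sum>j\<in>{1..<m}. a i j * coord_diff m i p * coord_diff m j q)"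

lemma coord_diff_sum:
  assumes "m \<ge> 1" "i \<in> {1..<m}"
  shows "(\<Sum>p\<in>{1..m}. coord_diff m i p * x p) = x i - x m"
proof -
  have "(\<Sum>p\<in>{1..m}. coord_diff m i p * x p)
      = (\<Sum>p\<in>{1..m}. if p = i then x p else 0) - (\<Sum>p\<in>{1..m}. if p = m then x p else 0)"
    unfolding coord_diff_def sum_subtractf[symmetric] by (intro sum.cong) auto
  then show ?thesis using assms by simp
qed

lemma lift_double_sum:
  assumes m: "m \<ge> 1"
  shows "(\<Sum>i\<in>{1..<m}. \<Sum>j\<in>{1..<m}. a i j * (k i j - k i m - k m j + k m m))
    = (\<Sum>p\<in>{1..m}. \<Sum>q\<in>{1..m}. lift a m p q * k p q)"
proof -
  have inner: "k i j - k i m - k m j + k m m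
      = (\<Sum>p\<in>{1..m}. \<Sum>q\<in>{1..m}. coord_diff m i p * coord_diff m j q * k p q)"
    if "i \<in> {1..<m}" "j \<in> {1..<m}" for i j
  proof -
    have row: "(\<Sum>q\<in>{1..m}. coord_diff m j q * k p q) = k p j - k p m" for p
      by (rule coord_diff_sum[OF m that(2)])
    have "(\<Sum>p\<in>{1..m}. \<Sum>q\<in>{1..m}. coord_diff m i p * coord_diff m j q * k p q)
        = (\<Sum>p\<in>{1..m}. coord_diff m i p * (\<Sum>q\<in>{1..m}. coord_diff m j q * k p q))"
      by (simp add: sum_distrib_left mult.assoc)
    also have "\<dots> = (\<Sum>p\<in>{1..m}. coord_diff m i p * (k p j - k p m))"
      by (simp only: row)
    also have "\<dots> = (k i j - k i m) - (k m j - k m m)"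
      by (rule coord_diff_sum[OF m that(1)])
    finally show ?thesis by simp
  qed
  have "(\<Sum>i\<in>{1..<m}. \<Sum>j\<in>{1..<m}. a i j * (k i j - k i m - k m j + k m m))
      = (\<Sum>i\<in>{1..<m}. \<Sum>j\<in>{1..<m}. \<Sum>p\<in>{1..m}. \<Sum>q\<in>{1..m}.
           a i j * coord_diff m i p * coord_diff m j q * k p q)"
    using inner by (simp add: sum_distrib_left mult.assoc)
  also have "\<dots> = (\<Sum>i\<in>{1..<m}. \<Sum>p\<in>{1..m}. \<Sum>j\<in>{1..<m}. \<Sum>q\<in>{1..m}.
           a i j * coord_diff m i p * coord_diff m j q * k p q)"
    by (rule sum.cong[OF refl], rule sum.swap)
  also have "\<dots> = (\<Sum>p\<in>{1..m}. \<Sum>i\<in>{1..<m}. \<Sum>j\<in>{1..<m}. \<Sum>q\<in>{1..m}.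
           a i j * coord_diff m i p * coord_diff m j q * k p q)"
    by (rule sum.swap)
  also have "\<dots> = (\<Sum>p\<in>{1..m}. \<Sum>i\<in>{1..<m}. \<Sum>q\<in>{1..m}. \<Sum>j\<in>{1..<m}.
           a i j * coord_diff m i p * coord_diff m j q * k p q)"
    by (rule sum.cong[OF refl], rule sum.cong[OF refl], rule sum.swap)
  also have "\<dots> = (\<Sum>p\<in>{1..m}. \<Sum>q\<in>{1..m}. \<Sum>i\<in>{1..<m}. \<Sum>j\<in>{1..<m}.
           a i j * coord_diff m i p * coord_diff m j q * k p q)"
    by (rule sum.cong[OF refl], rule sum.swap)
  also have "\<dots> = (\<Sum>p\<in>{1..m}. \<Sum>q\<in>{1..m}. lift a m p q * k p q)"
    unfolding lift_def by (simp add: sum_distrib_right)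
  finally show ?thesis .
qed

lemma lift_bilinear_form:
  assumes "m \<ge> 1"
  shows "(\<Sum>i\<in>{1..<m}. \<Sum>j\<in>{1..<m}. a i j * (x i - x m) * (y j - y m))
    = (\<Sum>p\<in>{1..m}. \<Sum>q\<in>{1..m}. lift a m p q * x p * y q)"
  using lift_double_sum[OF assms, of a "\<lambda>p q. x p * y q"]
  by (simp add: algebra_simps)

lemma lift_restrict: "p \<in> {1..<m} \<Longrightarrow> q \<in> {1..<m} \<Longrightarrow> lift a m p q = a p q"
  unfolding lift_def coord_diff_def by (simp add: if_distrib[of "\<lambda>x. _ * x"] sum.delta cong: if_cong)

lemma lift_sym:
  assumes "\<forall>i\<in>{1..<m}. \<forall>j\<in>{1..<m}. a i j = a j i"
  shows "lift a m p q = lift a m q p"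
  unfolding lift_def using assms by (subst sum.swap) (intro sum.cong refl, auto simp: mult_ac)

lemma lift_row_sum:
  assumes "m \<ge> 1"
  shows "(\<Sum>q\<in>{1..m}. lift a m p q) = 0"
proof -
  have "(\<Sum>q\<in>{1..m}. lift a m p q)
      = (\<Sum>i\<in>{1..<m}. \<Sum>j\<in>{1..<m}. a i j * coord_diff m i p * (\<Sum>q\<in>{1..m}. coord_diff m j q * 1))"
    unfolding lift_def
    by (subst sum.swap, rule sum.cong[OF refl], subst sum.swap) (simp add: sum_distrib_left)
  also have "\<dots> = 0"
    using coord_diff_sum[OF assms, of _ "\<lambda>_. 1"] by simp
  finally show ?thesis .
qed

lemma lift_last_column:
  assumes "m \<ge> 1" "p \<in> {1..<m}"
  shows "lift a m p m = - (\<Sum>q\<in>{1..<m}. a p q)"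
proof -
  have "{1..m} = insert m {1..<m}" using assms(1) by auto
  then have "lift a m p m + (\<Sum>q\<in>{1..<m}. lift a m p q) = 0"
    using lift_row_sum[OF assms(1), of a p] by simp
  moreover have "(\<Sum>q\<in>{1..<m}. lift a m p q) = (\<Sum>q\<in>{1..<m}. a p q)"
    using assms(2) by (intro sum.cong) (auto simp: lift_restrict)
  ultimately show ?thesis by simp
qed

lemma lift_last_column_two_terms:
  assumes m: "m \<ge> 1" and ik: "i \<in> {1..<m}" "k \<in> {1..<m}" "i \<noteq> k"
    and row: "\<forall>j\<in>{1..<m}. j \<noteq> i \<longrightarrow> j \<noteq> k \<longrightarrow> a i j = 0"
  shows "lift a m i m = - (a i i + a i k)"
proof -
  have "(\<Sum>j\<in>{1..<m}. a i j) = a i i + a i k"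
    using ik row by (intro sum_eq_two_terms) auto
  then show ?thesis using lift_last_column[OF m ik(1)] by simp
qed

lemma zero_row_sums_eqI:
  fixes G H :: "nat \<Rightarrow> nat \<Rightarrow> real"
  assumes I: "finite I" "m \<in> I"
    and sym: "\<forall>p\<in>I. \<forall>q\<in>I. G p q = G q p" "\<forall>p\<in>I. \<forall>q\<in>I. H p q = H q p"
    and rows: "\<forall>p\<in>I. sum (G p) I = 0" "\<forall>p\<in>I. sum (H p) I = 0"
    and eq: "\<forall>p\<in>I - {m}. \<forall>q\<in>I - {m}. G p q = H p q"
    and pq: "p \<in> I" "q \<in> I"
  shows "G p q = H p q"
proof -
  have last: "G p m = - sum (G p) (I - {m})" "H p m = - sum (H p) (I - {m})" if "p \<in> I" for p
    using rows that sum.remove[OF I, of "G p"] sum.remove[OF I, of "H p"] by auto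
  have col: "G p m = H p m" if p: "p \<in> I - {m}" for p
  proof -
    have "sum (G p) (I - {m}) = sum (H p) (I - {m})" using eq p by (intro sum.cong) auto
    then show ?thesis using last p by simp
  qed
  have row: "G m q = H m q" if q: "q \<in> I - {m}" for q
    using col[OF q] sym(1)[rule_format, of m q] sym(2)[rule_format, of m q] q I(2) by simp
  have corner: "G m m = H m m"
  proof -
    have "sum (G m) (I - {m}) = sum (H m) (I - {m})" using row by (intro sum.cong) auto
    then show ?thesis using last I(2) by simp
  qed
  show ?thesis
    using pq col row corner eq by (cases "p = m"; cases "q = m") auto
qed

definition tri_form :: "(nat \<Rightarrow> nat \<Rightarrow> real) \<Rightarrow> nat set
    \<Rightarrow> (nat \<Rightarrow> real) \<Rightarrow> (nat \<Rightarrow> real) \<Rightarrow> (nat \<Rightarrow> real) \<Rightarrow> real" where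
  "tri_form G I u w v = (\<Sum>p\<in>I. \<Sum>q\<in>I. G p q * (u p * w p) * v q)"

definition star_shaped :: "nat set \<Rightarrow> (nat \<Rightarrow> nat \<Rightarrow> real) \<Rightarrow> nat \<Rightarrow> bool" where
  "star_shaped I G k \<longleftrightarrow> (\<forall>p\<in>I. \<forall>q\<in>I. p \<noteq> q \<and> p \<noteq> k \<and> q \<noteq> k \<longrightarrow> G p q = 0)"

definition diag_rank_one :: "nat set \<Rightarrow> (nat \<Rightarrow> nat \<Rightarrow> real) \<Rightarrow> (nat \<Rightarrow> real) \<Rightarrow> bool" where
  "diag_rank_one I G \<alpha> \<longleftrightarrow>
     (\<forall>p\<in>I. \<forall>q\<in>I. G p q = (if p = q then \<alpha> p else 0) - \<alpha> p * \<alpha> q / sum \<alpha> I)"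

lemma star_shaped_lift_last_iff:
  "star_shaped {1..m} (lift a m) m \<longleftrightarrow> (\<forall>i\<in>{1..<m}. \<forall>j\<in>{1..<m}. i \<noteq> j \<longrightarrow> a i j = 0)"
  unfolding star_shaped_def by (auto simp: lift_restrict)

lemma star_shaped_lift_if_last_column:
  assumes sym: "\<forall>i\<in>{1..<m}. \<forall>j\<in>{1..<m}. a i j = a j i"
    and off: "\<forall>i\<in>{1..<m}. \<forall>j\<in>{1..<m}. i \<noteq> j \<and> i \<noteq> k \<and> j \<noteq> k \<longrightarrow> a i j = 0"
    and last: "\<And>i. i \<in> {1..<m} \<Longrightarrow> i \<noteq> k \<Longrightarrow> lift a m i m = 0"
  shows "star_shaped {1..m} (lift a m) k"
  unfolding star_shaped_def
proof (intro ballI impI)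
  fix p q assume pq: "p \<in> {1..m}" "q \<in> {1..m}" "p \<noteq> q \<and> p \<noteq> k \<and> q \<noteq> k"
  consider "p \<in> {1..<m}" "q \<in> {1..<m}" | "p \<in> {1..<m}" "q = m" | "p = m" "q \<in> {1..<m}"
    using pq by (cases "p = m"; cases "q = m") auto
  then show "lift a m p q = 0"
  proof cases
    case 1 then show ?thesis using off pq by (simp add: lift_restrict)
  next
    case 2 then show ?thesis using last pq by simp
  next
    case 3 then show ?thesis using last pq lift_sym[OF sym, of q m] by simp
  qed
qed

lemma star_shaped_lift_iff:
  assumes m: "m \<ge> 1" and k: "k \<in> {1..<m}" and sym: "\<forall>i\<in>{1..<m}. \<forall>j\<in>{1..<m}. a i j = a j i"
  shows "star_shaped {1..m} (lift a m) k \<longleftrightarrow>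
    (\<forall>i\<in>{1..<m}. i \<noteq> k \<longrightarrow> - a i k = a i i)
    \<and> (\<forall>i\<in>{1..<m}. \<forall>j\<in>{1..<m}. i \<noteq> j \<and> i \<noteq> k \<and> j \<noteq> k \<longrightarrow> a i j = 0)"
    (is "_ \<longleftrightarrow> ?col \<and> ?off")
proof -
  have last: "lift a m i m = - (a i i + a i k)" if ?off "i \<in> {1..<m}" "i \<noteq> k" for i
  proof (rule lift_last_column_two_terms[OF m that(2) k that(3)])
    show "\<forall>j\<in>{1..<m}. j \<noteq> i \<longrightarrow> j \<noteq> k \<longrightarrow> a i j = 0"
      using that(1)[rule_format, of i] that(2,3) by auto
  qed
  show ?thesis
  proof
    assume star: "star_shaped {1..m} (lift a m) k"
    have ?off
    proof (intro ballI impI)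
      fix i j assume ij: "i \<in> {1..<m}" "j \<in> {1..<m}" and "i \<noteq> j \<and> i \<noteq> k \<and> j \<noteq> k"
      then have "a i j = lift a m i j" by (simp add: lift_restrict)
      also have "\<dots> = 0" using star \<open>i \<noteq> j \<and> i \<noteq> k \<and> j \<noteq> k\<close> ij unfolding star_shaped_def by auto
      finally show "a i j = 0" .
    qed
    moreover have ?col
    proof (intro ballI impI)
      fix i assume i: "i \<in> {1..<m}" "i \<noteq> k"
      then have "lift a m i m = 0" using star k unfolding star_shaped_def by auto
      then show "- a i k = a i i" using last[OF \<open>?off\<close> i] by simp
    qed
    ultimately show "?col \<and> ?off" by blast
  next
    assume "?col \<and> ?off"
    then have col: ?col and off: ?off by blast+
    have "lift a m i m = 0" if "i \<in> {1..<m}" "i \<noteq> k" for i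
      using last[OF off that] col[rule_format, OF that] by simp
    then show "star_shaped {1..m} (lift a m) k"
      by (rule star_shaped_lift_if_last_column[OF sym off])
  qed
qed

lemma diag_rank_one_lift_iff:
  assumes m: "m \<ge> 1" and S: "sum \<alpha> {1..m} \<noteq> 0"
    and sym: "\<forall>i\<in>{1..<m}. \<forall>j\<in>{1..<m}. a i j = a j i"
  shows "diag_rank_one {1..m} (lift a m) \<alpha> \<longleftrightarrow>
    (\<forall>i\<in>{1..<m}. \<forall>j\<in>{1..<m}.
       a i j = (if i = j then \<alpha> i else 0) - \<alpha> i * \<alpha> j / sum \<alpha> {1..m})"
    (is "_ \<longleftrightarrow> (\<forall>i\<in>{1..<m}. \<forall>j\<in>{1..<m}. a i j = ?H i j)")
proof
  assume G: "diag_rank_one {1..m} (lift a m) \<alpha>"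
  show "\<forall>i\<in>{1..<m}. \<forall>j\<in>{1..<m}. a i j = ?H i j"
  proof (intro ballI)
    fix i j assume ij: "i \<in> {1..<m}" "j \<in> {1..<m}"
    then have "a i j = lift a m i j" by (simp add: lift_restrict)
    also have "\<dots> = ?H i j" using G ij unfolding diag_rank_one_def by auto
    finally show "a i j = ?H i j" .
  qed
next
  assume a: "\<forall>i\<in>{1..<m}. \<forall>j\<in>{1..<m}. a i j = ?H i j"
  have "sum (?H p) {1..m} = \<alpha> p - \<alpha> p * sum \<alpha> {1..m} / sum \<alpha> {1..m}" if "p \<in> {1..m}" for p
    using that by (simp add: sum_subtractf sum_divide_distrib[symmetric] sum_distrib_left)
  then have rows: "\<forall>p\<in>{1..m}. sum (?H p) {1..m} = 0" using S by simp
  have "lift a m p q = ?H p q" if "p \<in> {1..m}" "q \<in> {1..m}" for p q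
  proof (rule zero_row_sums_eqI[where I = "{1..m}" and m = m and G = "lift a m" and H = ?H])
    show "\<forall>p\<in>{1..m}. \<forall>q\<in>{1..m}. lift a m p q = lift a m q p"
      using lift_sym[OF sym] by blast
    show "\<forall>p\<in>{1..m}. \<forall>q\<in>{1..m}. ?H p q = ?H q p"
      by (simp add: mult.commute)
    show "\<forall>p\<in>{1..m}. sum (lift a m p) {1..m} = 0"
      using lift_row_sum[OF m] by blast
    show "\<forall>p\<in>{1..m} - {m}. \<forall>q\<in>{1..m} - {m}. lift a m p q = ?H p q"
      using a by (auto simp: lift_restrict)
  qed (use m that rows in auto)
  then show "diag_rank_one {1..m} (lift a m) \<alpha>"
    unfolding diag_rank_one_def by blast
qed

section \<open>Symmetric cubic forms of Laplacian type\<close>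

definition swap_vec :: "(nat \<Rightarrow> real) \<Rightarrow> nat \<Rightarrow> nat \<Rightarrow> nat \<Rightarrow> real" where
  "swap_vec \<mu> p q = (\<lambda>r. if r = p then \<mu> q else if r = q then - \<mu> p else 0)"

lemma swap_vec_weighted_sum:
  fixes c \<mu> :: "nat \<Rightarrow> real"
  assumes "finite I" "p \<in> I" "q \<in> I" "p \<noteq> q"
  shows "(\<Sum>r\<in>I. c r * swap_vec \<mu> p q r) = c p * \<mu> q - c q * \<mu> p"
proof -
  have "(\<Sum>r\<in>I. c r * swap_vec \<mu> p q r) = c p * swap_vec \<mu> p q p + c q * swap_vec \<mu> p q q"
    by (rule sum_eq_two_terms[OF assms]) (simp add: swap_vec_def)
  then show ?thesis using assms(4) by (simp add: swap_vec_def)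
qed

lemma annihilator_proportional:
  fixes c \<mu> :: "nat \<Rightarrow> real"
  assumes I: "finite I" and c: "\<And>w. (\<Sum>r\<in>I. \<mu> r * w r) = 0 \<Longrightarrow> (\<Sum>r\<in>I. c r * w r) = 0"
    and pq: "p \<in> I" "q \<in> I"
  shows "c p * \<mu> q = c q * \<mu> p"
proof (cases "p = q")
  case False
  have "(\<Sum>r\<in>I. \<mu> r * swap_vec \<mu> p q r) = 0"
    using swap_vec_weighted_sum[OF I pq False, of \<mu> \<mu>] by simp
  then have "(\<Sum>r\<in>I. c r * swap_vec \<mu> p q r) = 0" by (rule c)
  then show ?thesis using swap_vec_weighted_sum[OF I pq False, of c \<mu>] by simp
qed simp

lemma annihilator_zero:
  fixes c \<mu> :: "nat \<Rightarrow> real"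
  assumes I: "finite I" and c: "\<And>w. (\<Sum>r\<in>I. \<mu> r * w r) = 0 \<Longrightarrow> (\<Sum>r\<in>I. c r * w r) = 0"
    and S: "sum \<mu> I \<noteq> 0" and c0: "sum c I = 0" and p: "p \<in> I"
  shows "c p = 0"
proof -
  have "c p * sum \<mu> I = (\<Sum>q\<in>I. c p * \<mu> q)" by (simp add: sum_distrib_left)
  also have "\<dots> = (\<Sum>q\<in>I. c q * \<mu> p)"
    using annihilator_proportional[OF I c p] by (intro sum.cong) auto
  also have "\<dots> = \<mu> p * sum c I" by (simp add: sum_distrib_left mult.commute)
  finally show ?thesis using S c0 by simp
qed

lemma constant_on_distinct_pairs:
  fixes h :: "nat \<Rightarrow> nat \<Rightarrow> real"
  assumes sym: "\<And>p q. p \<in> I \<Longrightarrow> q \<in> I \<Longrightarrow> h p q = h q p"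
    and tri: "\<And>i j l. i \<in> I \<Longrightarrow> j \<in> I \<Longrightarrow> l \<in> I \<Longrightarrow> i \<noteq> j \<Longrightarrow> i \<noteq> l \<Longrightarrow> j \<noteq> l \<Longrightarrow> h i j = h i l"
    and pq: "p \<in> I" "q \<in> I" "p \<noteq> q" and pq': "p' \<in> I" "q' \<in> I" "p' \<noteq> q'"
  shows "h p q = h p' q'"
proof -
  have same_first: "h i j = h i l" if "i \<in> I" "j \<in> I" "l \<in> I" "i \<noteq> j" "i \<noteq> l" for i j l
  proof (cases "j = l")
    case False
    show ?thesis by (rule tri[OF that False])
  qed simp
  show ?thesis
  proof (cases "p = p'")
    case True then show ?thesis using same_first[of p q q'] pq pq' by blast
  next
    case False
    have "h p q = h p p'" using same_first[of p q p'] pq pq' False by blast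
    also have "\<dots> = h p' p" using sym pq(1) pq'(1) .
    also have "\<dots> = h p' q'" using same_first[of p' p q'] pq pq' False by blast
    finally show ?thesis .
  qed
qed

locale laplacian_form =
  fixes I :: "nat set" and G :: "nat \<Rightarrow> nat \<Rightarrow> real"
  assumes finite_I: "finite I" and two_points: "\<exists>i\<in>I. \<exists>j\<in>I. i \<noteq> j"
    and symmetric: "\<And>p q. p \<in> I \<Longrightarrow> q \<in> I \<Longrightarrow> G p q = G q p"
    and zero_rows: "\<And>p. p \<in> I \<Longrightarrow> sum (G p) I = 0"
    and positive: "\<And>x. \<exists>i\<in>I. \<exists>j\<in>I. x i \<noteq> x j \<Longrightarrow> (\<Sum>p\<in>I. \<Sum>q\<in>I. G p q * x p * x q) > 0"
begin

lemma quadratic_two_terms: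
  assumes "i \<in> I" "j \<in> I" "i \<noteq> j" "\<forall>r\<in>I. r \<noteq> i \<longrightarrow> r \<noteq> j \<longrightarrow> x r = 0"
  shows "(\<Sum>p\<in>I. \<Sum>q\<in>I. G p q * x p * x q)
    = G i i * (x i)\<^sup>2 + 2 * G i j * x i * x j + G j j * (x j)\<^sup>2"
proof -
  have "(\<Sum>p\<in>I. \<Sum>q\<in>I. G p q * x p * x q) = (\<Sum>p\<in>I. G p i * x p * x i + G p j * x p * x j)"
  proof (rule sum.cong[OF refl])
    fix p assume "p \<in> I"
    show "(\<Sum>q\<in>I. G p q * x p * x q) = G p i * x p * x i + G p j * x p * x j"
      by (rule sum_eq_two_terms[OF finite_I assms(1-3)]) (use assms(4) in simp)
  qed
  also have "\<dots> = G i i * x i * x i + G i j * x i * x j + (G j i * x j * x i + G j j * x j * x j)"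
    by (rule sum_eq_two_terms[OF finite_I assms(1-3)]) (use assms(4) in simp)
  finally show ?thesis using symmetric[OF assms(1,2)] by (simp add: power2_eq_square algebra_simps)
qed

lemma diag_pos:
  assumes i: "i \<in> I"
  shows "G i i > 0"
proof -
  obtain j where j: "j \<in> I" "j \<noteq> i" using two_points by metis
  have "(\<Sum>p\<in>I. \<Sum>q\<in>I. G p q * unit_vec i p * unit_vec i q) > 0"
    using i j by (intro positive) (auto simp: unit_vec_def)
  also have "(\<Sum>p\<in>I. \<Sum>q\<in>I. G p q * unit_vec i p * unit_vec i q) = G i i"
    using quadratic_two_terms[OF i j(1) j(2)[symmetric], of "unit_vec i"] j(2)
    by (simp add: unit_vec_def)
  finally show ?thesis .
qed

lemma star_shaped_row:
  assumes star: "star_shaped I G k" and k: "k \<in> I" and p: "p \<in> I" "p \<noteq> k"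
  shows "G p k = - G p p"
proof -
  have "0 = sum (G p) I" using zero_rows[OF p(1)] by simp
  also have "\<dots> = G p p + G p k"
    using star p k unfolding star_shaped_def by (intro sum_eq_two_terms[OF finite_I]) auto
  finally show ?thesis by simp
qed

lemma star_shaped_center_diag:
  assumes star: "star_shaped I G k" and k: "k \<in> I"
  shows "G k k = (\<Sum>q\<in>I - {k}. G q q)"
proof -
  have "0 = G k k + (\<Sum>q\<in>I - {k}. G k q)"
    using zero_rows[OF k] sum.remove[OF finite_I k, of "G k"] by simp
  also have "(\<Sum>q\<in>I - {k}. G k q) = (\<Sum>q\<in>I - {k}. - G q q)"
  proof (rule sum.cong[OF refl])
    fix q assume q: "q \<in> I - {k}"
    then show "G k q = - G q q" using star_shaped_row[OF star k, of q] symmetric[OF k, of q] by simp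
  qed
  finally show ?thesis by (simp add: sum_negf)
qed

lemma diag_rank_one_signs:
  assumes G: "diag_rank_one I G \<alpha>" and nz: "\<forall>i\<in>I. \<alpha> i \<noteq> 0" and S: "sum \<alpha> I \<noteq> 0"
  shows "(\<forall>i\<in>I. \<alpha> i > 0) \<or> ((\<exists>!i. i \<in> I \<and> \<alpha> i < 0) \<and> sum \<alpha> I < 0)"
proof (cases "\<forall>i\<in>I. \<alpha> i > 0")
  case False
  then obtain i where "i \<in> I" "\<not> \<alpha> i > 0" by blast
  then have i: "i \<in> I" "\<alpha> i < 0" using nz by force+
  have unique: "j = i" if j: "j \<in> I" "\<alpha> j < 0" for j
  proof (rule ccontr)
    assume ji: "j \<noteq> i"
    define x where "x r = (if r = i then \<alpha> j else if r = j then - \<alpha> i else 0)" for r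
    have "x i \<noteq> x j" using i j ji unfolding x_def by auto
    then have "(\<Sum>p\<in>I. \<Sum>q\<in>I. G p q * x p * x q) > 0" using i j by (intro positive) blast
    also have "(\<Sum>p\<in>I. \<Sum>q\<in>I. G p q * x p * x q)
        = G i i * (x i)\<^sup>2 + 2 * G i j * x i * x j + G j j * (x j)\<^sup>2"
      using i j ji by (intro quadratic_two_terms) (auto simp: x_def)
    also have "\<dots> = \<alpha> i * \<alpha> j * (\<alpha> i + \<alpha> j)"
    proof -
      have G_vals: "G i i = \<alpha> i - \<alpha> i * \<alpha> i / sum \<alpha> I" "G j j = \<alpha> j - \<alpha> j * \<alpha> j / sum \<alpha> I"
        "G i j = - \<alpha> i * \<alpha> j / sum \<alpha> I"
        using G i j ji unfolding diag_rank_one_def by auto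
      have x_vals: "x i = \<alpha> j" "x j = - \<alpha> i" using ji unfolding x_def by auto
      show ?thesis unfolding G_vals x_vals using S by (simp add: field_simps power2_eq_square)
    qed
    finally have "\<alpha> i * \<alpha> j * (\<alpha> i + \<alpha> j) > 0" .
    moreover have "\<alpha> i * \<alpha> j > 0" using i j by (simp add: mult_neg_neg)
    ultimately show False using i j by (simp add: zero_less_mult_iff)
  qed
  have "\<alpha> i - (\<alpha> i)\<^sup>2 / sum \<alpha> I > 0"
    using diag_pos[OF i(1)] G i(1) unfolding diag_rank_one_def by (simp add: power2_eq_square)
  have "sum \<alpha> I < 0"
  proof (rule ccontr)
    assume "\<not> sum \<alpha> I < 0"
    then have "(\<alpha> i)\<^sup>2 / sum \<alpha> I \<ge> 0" by simp
    then show False using \<open>\<alpha> i - (\<alpha> i)\<^sup>2 / sum \<alpha> I > 0\<close> i(2) by linarith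
  qed
  then show ?thesis using i unique by blast
qed simp

end

text \<open>The condition that natural reductivity of an invariant complement imposes on the matrix of
  the metric, \<open>\<mu>\<close> being the weights of that complement.\<close>

locale tensor_symmetric = laplacian_form +
  fixes \<mu> :: "nat \<Rightarrow> real"
  assumes weight_sum: "sum \<mu> I \<noteq> 0"
    and tri_form_sym: "\<And>u w v. (\<Sum>r\<in>I. \<mu> r * u r) = 0 \<Longrightarrow> (\<Sum>r\<in>I. \<mu> r * w r) = 0 \<Longrightarrow>
      (\<Sum>r\<in>I. \<mu> r * v r) = 0 \<Longrightarrow> tri_form G I u w v = tri_form G I v w u"
begin

abbreviation orth :: "(nat \<Rightarrow> real) \<Rightarrow> bool" where
  "orth w \<equiv> (\<Sum>r\<in>I. \<mu> r * w r) = 0"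

lemma orth_unit_vec: "i \<in> I \<Longrightarrow> \<mu> i = 0 \<Longrightarrow> orth (unit_vec i)"
  by (subst sum_eq_single_term[OF finite_I, of i]) (auto simp: unit_vec_def)

lemma orth_swap_vec: "p \<in> I \<Longrightarrow> q \<in> I \<Longrightarrow> p \<noteq> q \<Longrightarrow> orth (swap_vec \<mu> p q)"
  using swap_vec_weighted_sum[OF finite_I, of p q \<mu> \<mu>] by simp

lemma exists_nonzero_weight: "\<exists>k\<in>I. \<mu> k \<noteq> 0"
  using weight_sum sum.neutral[of I \<mu>] by blast

lemma zero_weight_identity:
  assumes i: "i \<in> I" "\<mu> i = 0" and w: "orth w" and v: "orth v"
  shows "(\<Sum>q\<in>I. ((w i - w q) * G i q) * v q) = 0"
proof -
  have "tri_form G I (unit_vec i) w v = (\<Sum>q\<in>I. G i q * w i * v q)"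
    unfolding tri_form_def
    by (subst sum_eq_single_term[OF finite_I i(1)]) (auto simp: unit_vec_def intro!: sum.neutral)
  moreover have "tri_form G I v w (unit_vec i) = (\<Sum>q\<in>I. G i q * w q * v q)"
    unfolding tri_form_def
  proof (rule sum.cong[OF refl])
    fix p assume p: "p \<in> I"
    have "(\<Sum>q\<in>I. G p q * (v p * w p) * unit_vec i q) = G p i * (v p * w p)"
      by (subst sum_eq_single_term[OF finite_I i(1)]) (auto simp: unit_vec_def)
    then show "(\<Sum>q\<in>I. G p q * (v p * w p) * unit_vec i q) = G i p * w p * v p"
      using symmetric[OF p i(1)] by simp
  qed
  moreover have "tri_form G I (unit_vec i) w v = tri_form G I v w (unit_vec i)"
    using tri_form_sym[OF orth_unit_vec[OF i] w v] .
  ultimately have "(\<Sum>q\<in>I. G i q * w i * v q) = (\<Sum>q\<in>I. G i q * w q * v q)" by simp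
  moreover have "(\<Sum>q\<in>I. ((w i - w q) * G i q) * v q)
      = (\<Sum>q\<in>I. G i q * w i * v q) - (\<Sum>q\<in>I. G i q * w q * v q)"
    by (simp add: sum_subtractf[symmetric] algebra_simps)
  ultimately show ?thesis by simp
qed

lemma zero_weight_row:
  assumes i: "i \<in> I" "\<mu> i = 0"
  shows "\<exists>t. t \<noteq> 0 \<and> (\<forall>q\<in>I. q \<noteq> i \<longrightarrow> G i q = t * \<mu> q)"
proof -
  define c where "c q = (if q = i then 0 else G i q)" for q
  have c_eq: "c q = (unit_vec i i - unit_vec i q) * G i q" for q
    unfolding c_def unit_vec_def by simp
  have annihilates: "(\<Sum>q\<in>I. c q * v q) = 0" if "orth v" for v
    unfolding c_eq using zero_weight_identity[OF i orth_unit_vec[OF i] that] .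
  obtain k where k: "k \<in> I" "\<mu> k \<noteq> 0" using exists_nonzero_weight by blast
  define t where "t = c k / \<mu> k"
  have ct: "c q = t * \<mu> q" if "q \<in> I" for q
  proof -
    have "c q * \<mu> k = c k * \<mu> q" by (rule annihilator_proportional[OF finite_I annihilates that k(1)])
    then show ?thesis unfolding t_def using k(2) by (simp add: field_simps)
  qed
  have G_row: "G i q = t * \<mu> q" if "q \<in> I" "q \<noteq> i" for q
    using ct[OF that(1)] that(2) unfolding c_def by simp
  have "0 = G i i + (\<Sum>q\<in>I - {i}. G i q)"
    using zero_rows[OF i(1)] sum.remove[OF finite_I i(1), of "G i"] by simp
  also have "(\<Sum>q\<in>I - {i}. G i q) = t * sum \<mu> I"
    using G_row sum.remove[OF finite_I i(1), of \<mu>] i(2) by (simp add: sum_distrib_left)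
  finally have "t \<noteq> 0" using diag_pos[OF i(1)] by auto
  then show ?thesis using G_row by blast
qed

lemma zero_weight_imp_single_support:
  assumes i: "i \<in> I" "\<mu> i = 0" and pq: "p \<in> I" "q \<in> I" "\<mu> p \<noteq> 0" "\<mu> q \<noteq> 0"
  shows "p = q"
proof (rule ccontr)
  assume "p \<noteq> q"
  obtain t where t: "t \<noteq> 0" "\<forall>q\<in>I. q \<noteq> i \<longrightarrow> G i q = t * \<mu> q"
    using zero_weight_row[OF i] by blast
  have pi: "p \<noteq> i" "q \<noteq> i" using pq i by auto
  have same: "w p = w q" if w: "orth w" for w
  proof -
    define c where "c r = (w i - w r) * G i r" for r
    have "c p * \<mu> q = c q * \<mu> p"
      by (rule annihilator_proportional[OF finite_I _ pq(1,2)])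
        (use zero_weight_identity[OF i w] in \<open>simp add: c_def\<close>)
    then have "(w i - w p) * t * \<mu> p * \<mu> q = (w i - w q) * t * \<mu> q * \<mu> p"
      unfolding c_def using t pi pq by (simp add: mult_ac)
    then show ?thesis using t pq by (simp add: algebra_simps)
  qed
  have "(\<Sum>r\<in>I. (unit_vec p r - unit_vec q r) * w r) = 0" if "orth w" for w
  proof -
    have "(\<Sum>r\<in>I. (unit_vec p r - unit_vec q r) * w r)
        = (unit_vec p p - unit_vec q p) * w p + (unit_vec p q - unit_vec q q) * w q"
      by (rule sum_eq_two_terms[OF finite_I pq(1,2) \<open>p \<noteq> q\<close>]) (simp add: unit_vec_def)
    then show ?thesis using same[OF that] \<open>p \<noteq> q\<close> by (simp add: unit_vec_def)
  qed
  moreover have "(\<Sum>r\<in>I. unit_vec p r - unit_vec q r) = 0"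
    using \<open>p \<noteq> q\<close> by (subst sum_eq_two_terms[OF finite_I pq(1,2) \<open>p \<noteq> q\<close>]) (simp_all add: unit_vec_def)
  ultimately have "unit_vec p p - unit_vec q p = 0"
    by (rule annihilator_zero[OF finite_I _ weight_sum _ pq(1)])
  then show False using \<open>p \<noteq> q\<close> by (simp add: unit_vec_def)
qed

lemma star_shaped_if_zero_weight:
  assumes "\<exists>i\<in>I. \<mu> i = 0"
  shows "\<exists>k\<in>I. star_shaped I G k"
proof -
  obtain i0 where i0: "i0 \<in> I" "\<mu> i0 = 0" using assms by blast
  obtain k where k: "k \<in> I" "\<mu> k \<noteq> 0" using exists_nonzero_weight by blast
  have zero: "\<mu> j = 0" if j: "j \<in> I" "j \<noteq> k" for j
  proof (rule ccontr)
    assume "\<mu> j \<noteq> 0"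
    then have "j = k" by (rule zero_weight_imp_single_support[OF i0 j(1) k(1) _ k(2)])
    with j(2) show False ..
  qed
  have "star_shaped I G k"
    unfolding star_shaped_def
  proof (intro ballI impI)
    fix i j assume ij: "i \<in> I" "j \<in> I" "i \<noteq> j \<and> i \<noteq> k \<and> j \<noteq> k"
    have "\<mu> i = 0" using zero[of i] ij by blast
    then obtain t where row: "\<forall>q\<in>I. q \<noteq> i \<longrightarrow> G i q = t * \<mu> q"
      using zero_weight_row[OF ij(1)] by blast
    have "G i j = t * \<mu> j" using row ij by simp
    then show "G i j = 0" using zero[of j] ij by simp
  qed
  then show ?thesis using k(1) by blast
qed

lemma tri_form_two_terms:
  assumes u: "a \<in> I" "b \<in> I" "a \<noteq> b" "\<forall>r\<in>I. r \<noteq> a \<longrightarrow> r \<noteq> b \<longrightarrow> u r = 0"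
    and v: "c \<in> I" "d \<in> I" "c \<noteq> d" "\<forall>r\<in>I. r \<noteq> c \<longrightarrow> r \<noteq> d \<longrightarrow> v r = 0"
  shows "tri_form G I u w v
    = u a * w a * (G a c * v c + G a d * v d) + u b * w b * (G b c * v c + G b d * v d)"
proof -
  have "tri_form G I u w v = (\<Sum>p\<in>I. G p c * (u p * w p) * v c + G p d * (u p * w p) * v d)"
    unfolding tri_form_def
  proof (rule sum.cong[OF refl])
    fix p assume "p \<in> I"
    show "(\<Sum>q\<in>I. G p q * (u p * w p) * v q) = G p c * (u p * w p) * v c + G p d * (u p * w p) * v d"
      by (rule sum_eq_two_terms[OF finite_I v(1-3)]) (use v(4) in simp)
  qed
  also have "\<dots> = u a * w a * (G a c * v c + G a d * v d) + u b * w b * (G b c * v c + G b d * v d)"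
    by (subst sum_eq_two_terms[OF finite_I u(1-3)]) (use u(4) in \<open>auto simp: algebra_simps\<close>)
  finally show ?thesis .
qed

lemma nonzero_weights_ratio:
  assumes nz: "\<forall>r\<in>I. \<mu> r \<noteq> 0"
    and ijl: "i \<in> I" "j \<in> I" "l \<in> I" "i \<noteq> j" "i \<noteq> l" "j \<noteq> l"
  shows "\<mu> l * G i j = \<mu> j * G i l"
proof -
  define c where "c r = (if r = i then \<mu> l * G i j - \<mu> j * G i l
    else if r = j then \<mu> i * G j l - \<mu> l * G i j
    else if r = l then \<mu> j * G i l - \<mu> i * G j l else 0)" for r
  have sum3: "(\<Sum>r\<in>I. f r) = f i + f j + f l" if "\<forall>r\<in>I. r \<noteq> i \<longrightarrow> r \<noteq> j \<longrightarrow> r \<noteq> l \<longrightarrow> f r = 0"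
    for f :: "nat \<Rightarrow> real"
    by (rule sum_eq_three_terms[OF finite_I ijl that])
  have "(\<Sum>r\<in>I. c r * w r) = 0" if w: "orth w" for w
  proof -
    let ?u = "swap_vec \<mu> i j" and ?v = "swap_vec \<mu> i l"
    have t: "tri_form G I ?u w ?v = tri_form G I ?v w ?u"
      using tri_form_sym[OF orth_swap_vec[of i j] w orth_swap_vec[of i l]] ijl by blast
    have e1: "tri_form G I ?u w ?v
        = \<mu> j * w i * (G i i * \<mu> l - G i l * \<mu> i) - \<mu> i * w j * (G j i * \<mu> l - G j l * \<mu> i)"
      using ijl by (subst tri_form_two_terms[of i j _ i l]) (auto simp: swap_vec_def)
    have e2: "tri_form G I ?v w ?u
        = \<mu> l * w i * (G i i * \<mu> j - G i j * \<mu> i) - \<mu> i * w l * (G l i * \<mu> j - G l j * \<mu> i)"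
      using ijl by (subst tri_form_two_terms[of i l _ i j]) (auto simp: swap_vec_def)
    have sym: "G j i = G i j" "G l i = G i l" "G l j = G j l"
      using symmetric[of j i] symmetric[of l i] symmetric[of l j] ijl by auto
    have c_vals: "c i = \<mu> l * G i j - \<mu> j * G i l" "c j = \<mu> i * G j l - \<mu> l * G i j"
      "c l = \<mu> j * G i l - \<mu> i * G j l"
      using ijl by (auto simp: c_def)
    have "\<mu> i * (c i * w i + c j * w j + c l * w l) = tri_form G I ?u w ?v - tri_form G I ?v w ?u"
      unfolding c_vals e1 e2 sym by (simp add: algebra_simps)
    then have "\<mu> i * (c i * w i + c j * w j + c l * w l) = 0" using t by simp
    moreover have "(\<Sum>r\<in>I. c r * w r) = c i * w i + c j * w j + c l * w l"
      by (rule sum3) (simp add: c_def)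
    ultimately have "\<mu> i * (\<Sum>r\<in>I. c r * w r) = 0" by simp
    then show ?thesis using nz ijl by simp
  qed
  moreover have "(\<Sum>r\<in>I. c r) = 0" using ijl by (subst sum3) (auto simp: c_def)
  ultimately have "c i = 0" by (rule annihilator_zero[OF finite_I _ weight_sum _ ijl(1)])
  then show ?thesis unfolding c_def by simp
qed

lemma nonzero_weights_off_diagonal:
  assumes nz: "\<forall>r\<in>I. \<mu> r \<noteq> 0"
  obtains \<kappa> where "\<kappa> \<noteq> 0" "\<And>p q. p \<in> I \<Longrightarrow> q \<in> I \<Longrightarrow> p \<noteq> q \<Longrightarrow> G p q = - \<kappa> * \<mu> p * \<mu> q"
proof -
  define h where "h p q = G p q / (\<mu> p * \<mu> q)" for p q
  have G_h: "G p q = h p q * (\<mu> p * \<mu> q)" if "p \<in> I" "q \<in> I" for p q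
    using nz that unfolding h_def by simp
  have h_sym: "h p q = h q p" if "p \<in> I" "q \<in> I" for p q
    unfolding h_def using symmetric[OF that] by (simp add: mult.commute)
  have h_tri: "h i j = h i l" if ijl: "i \<in> I" "j \<in> I" "l \<in> I" "i \<noteq> j" "i \<noteq> l" "j \<noteq> l" for i j l
  proof -
    have nz': "\<mu> i \<noteq> 0" "\<mu> j \<noteq> 0" "\<mu> l \<noteq> 0" using nz ijl by auto
    have "h i j = \<mu> l * G i j / (\<mu> i * \<mu> j * \<mu> l)" unfolding h_def using nz' by simp
    also have "\<dots> = \<mu> j * G i l / (\<mu> i * \<mu> j * \<mu> l)" by (simp only: nonzero_weights_ratio[OF nz ijl])
    also have "\<dots> = h i l" unfolding h_def using nz' by (simp add: mult_ac)
    finally show ?thesis .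
  qed
  obtain p0 q0 where pq0: "p0 \<in> I" "q0 \<in> I" "p0 \<noteq> q0" using two_points by blast
  define \<kappa> where "\<kappa> = - h p0 q0"
  have G: "G p q = - \<kappa> * \<mu> p * \<mu> q" if "p \<in> I" "q \<in> I" "p \<noteq> q" for p q
    using G_h[OF that(1,2)] constant_on_distinct_pairs[of I h, OF h_sym h_tri that pq0]
    unfolding \<kappa>_def by simp
  have "\<kappa> \<noteq> 0"
  proof
    assume "\<kappa> = 0"
    have "(\<Sum>q\<in>I - {p0}. G p0 q) = 0"
    proof (rule sum.neutral, rule ballI)
      fix q assume "q \<in> I - {p0}"
      then show "G p0 q = 0" using G[of p0 q] pq0(1) \<open>\<kappa> = 0\<close> by simp
    qed
    then have "G p0 p0 = 0"
      using zero_rows[OF pq0(1)] sum.remove[OF finite_I pq0(1), of "G p0"] by simp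
    then show False using diag_pos[OF pq0(1)] by simp
  qed
  then show ?thesis using G that by blast
qed

theorem classification:
  "(\<exists>k\<in>I. star_shaped I G k) \<or> (\<exists>\<alpha>. (\<forall>i\<in>I. \<alpha> i \<noteq> 0) \<and> sum \<alpha> I \<noteq> 0 \<and> diag_rank_one I G \<alpha>)"
proof (cases "\<exists>i\<in>I. \<mu> i = 0")
  case True then show ?thesis using star_shaped_if_zero_weight by blast
next
  case False
  then have nz: "\<forall>r\<in>I. \<mu> r \<noteq> 0" by blast
  obtain \<kappa> where \<kappa>: "\<kappa> \<noteq> 0" and off: "\<And>p q. p \<in> I \<Longrightarrow> q \<in> I \<Longrightarrow> p \<noteq> q \<Longrightarrow> G p q = - \<kappa> * \<mu> p * \<mu> q"
    using nonzero_weights_off_diagonal[OF nz] by blast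
  define S where "S = sum \<mu> I"
  have S: "S \<noteq> 0" using weight_sum unfolding S_def .
  have diag: "G p p = \<kappa> * \<mu> p * (S - \<mu> p)" if p: "p \<in> I" for p
  proof -
    have "0 = G p p + (\<Sum>q\<in>I - {p}. G p q)"
      using zero_rows[OF p] sum.remove[OF finite_I p, of "G p"] by simp
    also have "(\<Sum>q\<in>I - {p}. G p q) = (\<Sum>q\<in>I - {p}. - \<kappa> * \<mu> p * \<mu> q)"
      using off p by (intro sum.cong) auto
    also have "\<dots> = - \<kappa> * \<mu> p * (S - \<mu> p)"
      using sum.remove[OF finite_I p, of \<mu>] unfolding S_def by (simp add: sum_distrib_left)
    finally show ?thesis by simp
  qed
  text \<open>Rescaling \<open>\<mu>\<close> by \<open>\<kappa> S\<close> puts \<open>G\<close> in the form \<open>diag(\<alpha>) - \<alpha>\<alpha>\<^sup>T / \<Sigma>\<alpha>\<close>.\<close>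
  define \<alpha> where "\<alpha> r = \<kappa> * S * \<mu> r" for r
  have sum_\<alpha>: "sum \<alpha> I = \<kappa> * S * S" unfolding \<alpha>_def S_def by (simp add: sum_distrib_left)
  have "G p q = (if p = q then \<alpha> p else 0) - \<alpha> p * \<alpha> q / (\<kappa> * S * S)" if pq: "p \<in> I" "q \<in> I" for p q
  proof (cases "p = q")
    case True
    have "\<alpha> p * \<alpha> p / (\<kappa> * S * S) = \<kappa> * \<mu> p * \<mu> p" using \<kappa> S unfolding \<alpha>_def by simp
    then show ?thesis using True diag[OF pq(1)] unfolding \<alpha>_def by (simp add: algebra_simps)
  next
    case False
    have "\<alpha> p * \<alpha> q / (\<kappa> * S * S) = \<kappa> * \<mu> p * \<mu> q" using \<kappa> S unfolding \<alpha>_def by simp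
    then show ?thesis using False off[OF pq False] by simp
  qed
  then have "diag_rank_one I G \<alpha>" unfolding diag_rank_one_def sum_\<alpha> by blast
  moreover have "\<forall>i\<in>I. \<alpha> i \<noteq> 0" using nz \<kappa> S unfolding \<alpha>_def by simp
  moreover have "sum \<alpha> I \<noteq> 0" using \<kappa> S sum_\<alpha> by simp
  ultimately show ?thesis by blast
qed

end

lemma laplacian_form_lift:
  assumes m: "m \<ge> 2"
    and sym: "\<forall>i\<in>{1..<m}. \<forall>j\<in>{1..<m}. a i j = a j i"
    and pd: "\<forall>x :: nat \<Rightarrow> real. (\<exists>i\<in>{1..<m}. x i \<noteq> 0) \<longrightarrow>
           (\<Sum>i\<in>{1..<m}. \<Sum>j\<in>{1..<m}. a i j * x i * x j) > 0"
  shows "laplacian_form {1..m} (lift a m)"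
proof
  show "finite {1..m}" by simp
  show "\<exists>i\<in>{1..m}. \<exists>j\<in>{1..m}. i \<noteq> j" using m by (intro bexI[of _ 1] bexI[of _ m]) auto
  show "lift a m p q = lift a m q p" for p q by (rule lift_sym[OF sym])
  show "sum (lift a m p) {1..m} = 0" for p using lift_row_sum[of m a p] m by simp
next
  fix x :: "nat \<Rightarrow> real" assume "\<exists>i\<in>{1..m}. \<exists>j\<in>{1..m}. x i \<noteq> x j"
  then obtain i j where ij: "i \<in> {1..m}" "j \<in> {1..m}" "x i \<noteq> x j" by blast
  have "\<exists>r\<in>{1..<m}. x r - x m \<noteq> 0"
  proof (cases "x i = x m")
    case True
    then have "j \<noteq> m" using ij by auto
    then show ?thesis using True ij by (intro bexI[of _ j]) auto
  next
    case False
    then have "i \<noteq> m" by auto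
    then show ?thesis using False ij by (intro bexI[of _ i]) auto
  qed
  then have "(\<Sum>i\<in>{1..<m}. \<Sum>j\<in>{1..<m}. a i j * (x i - x m) * (x j - x m)) > 0"
    using pd[rule_format, of "\<lambda>r. x r - x m"] by simp
  then show "(\<Sum>p\<in>{1..m}. \<Sum>q\<in>{1..m}. lift a m p q * x p * x q) > 0"
    using lift_bilinear_form[of m a x x] m by simp
qed

lemma star_shaped_lift_last_iff_diagonal:
  assumes L: "laplacian_form {1..m} (lift a m)"
  shows "star_shaped {1..m} (lift a m) m \<longleftrightarrow>
    (\<forall>i\<in>{1..<m}. a i i > 0) \<and> (\<forall>i\<in>{1..<m}. \<forall>j\<in>{1..<m}. i \<noteq> j \<longrightarrow> a i j = 0)"
proof -
  have "a i i > 0" if "i \<in> {1..<m}" for i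
    using laplacian_form.diag_pos[OF L, of i] that by (simp add: lift_restrict)
  then show ?thesis unfolding star_shaped_lift_last_iff by blast
qed

lemma ex_star_shaped_lift_iff:
  assumes L: "laplacian_form {1..m} (lift a m)"
    and m: "m \<ge> 1" and sym: "\<forall>i\<in>{1..<m}. \<forall>j\<in>{1..<m}. a i j = a j i"
  shows "(\<exists>k\<in>{1..<m}. star_shaped {1..m} (lift a m) k) \<longleftrightarrow>
    (\<exists>k\<in>{1..<m}. (\<forall>i\<in>{1..<m}. i \<noteq> k \<longrightarrow> - a i k = a i i \<and> a i i > 0)
          \<and> (\<forall>i\<in>{1..<m}. \<forall>j\<in>{1..<m}. i \<noteq> j \<and> i \<noteq> k \<and> j \<noteq> k \<longrightarrow> a i j = 0)
          \<and> a k k > (\<Sum>i\<in>{1..<m} - {k}. a i i))"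
proof -
  have diag: "a i i > 0" if "i \<in> {1..<m}" for i
    using laplacian_form.diag_pos[OF L, of i] that by (simp add: lift_restrict)
  have corner: "a k k > (\<Sum>i\<in>{1..<m} - {k}. a i i)"
    if k: "k \<in> {1..<m}" and star: "star_shaped {1..m} (lift a m) k" for k
  proof -
    have "{1..m} - {k} = insert m ({1..<m} - {k})" using k by auto
    then have "a k k = lift a m m m + (\<Sum>i\<in>{1..<m} - {k}. a i i)"
      using laplacian_form.star_shaped_center_diag[OF L star] k
      by (simp add: lift_restrict)
    then show ?thesis using laplacian_form.diag_pos[OF L, of m] m by simp
  qed
  have "star_shaped {1..m} (lift a m) k \<longleftrightarrow>
      (\<forall>i\<in>{1..<m}. i \<noteq> k \<longrightarrow> - a i k = a i i \<and> a i i > 0)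
      \<and> (\<forall>i\<in>{1..<m}. \<forall>j\<in>{1..<m}. i \<noteq> j \<and> i \<noteq> k \<and> j \<noteq> k \<longrightarrow> a i j = 0)
      \<and> a k k > (\<Sum>i\<in>{1..<m} - {k}. a i i)" (is "_ \<longleftrightarrow> ?col' \<and> ?off \<and> ?corner")
    if k: "k \<in> {1..<m}" for k
  proof
    assume star: "star_shaped {1..m} (lift a m) k"
    then have "(\<forall>i\<in>{1..<m}. i \<noteq> k \<longrightarrow> - a i k = a i i) \<and> ?off"
      using star_shaped_lift_iff[OF m k sym] by simp
    then show "?col' \<and> ?off \<and> ?corner" using diag corner[OF k star] by simp
  next
    assume "?col' \<and> ?off \<and> ?corner"
    then have "(\<forall>i\<in>{1..<m}. i \<noteq> k \<longrightarrow> - a i k = a i i) \<and> ?off" by simp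
    then show "star_shaped {1..m} (lift a m) k" using star_shaped_lift_iff[OF m k sym] by simp
  qed
  then show ?thesis by (rule bex_cong[OF refl])
qed

lemma ex_diag_rank_one_lift_iff:
  assumes L: "laplacian_form {1..m} (lift a m)"
    and m: "m \<ge> 1" and sym: "\<forall>i\<in>{1..<m}. \<forall>j\<in>{1..<m}. a i j = a j i"
  shows "(\<exists>\<alpha>. (\<forall>i\<in>{1..m}. \<alpha> i \<noteq> 0) \<and> sum \<alpha> {1..m} \<noteq> 0 \<and> diag_rank_one {1..m} (lift a m) \<alpha>) \<longleftrightarrow>
    (\<exists>\<alpha> :: nat \<Rightarrow> real. (\<forall>i\<in>{1..m}. \<alpha> i \<noteq> 0)
          \<and> (\<forall>i\<in>{1..<m}. \<forall>j\<in>{1..<m}.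
                a i j = (if i = j then \<alpha> i else 0) - \<alpha> i * \<alpha> j / (\<Sum>l\<in>{1..m}. \<alpha> l))
          \<and> ((\<forall>i\<in>{1..m}. \<alpha> i > 0)
             \<or> ((\<exists>!i. i \<in> {1..m} \<and> \<alpha> i < 0) \<and> (\<Sum>l\<in>{1..m}. \<alpha> l) < 0)))"
proof (rule ex_cong1)
  fix \<alpha> :: "nat \<Rightarrow> real"
  let ?formula = "\<forall>i\<in>{1..<m}. \<forall>j\<in>{1..<m}.
    a i j = (if i = j then \<alpha> i else 0) - \<alpha> i * \<alpha> j / sum \<alpha> {1..m}"
  let ?signs = "(\<forall>i\<in>{1..m}. \<alpha> i > 0) \<or> ((\<exists>!i. i \<in> {1..m} \<and> \<alpha> i < 0) \<and> sum \<alpha> {1..m} < 0)"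
  have S: "sum \<alpha> {1..m} \<noteq> 0" if ?signs
  proof -
    have "sum \<alpha> {1..m} > 0" if "\<forall>i\<in>{1..m}. \<alpha> i > 0" using that m by (intro sum_pos) auto
    then show ?thesis using \<open>?signs\<close> by linarith
  qed
  show "((\<forall>i\<in>{1..m}. \<alpha> i \<noteq> 0) \<and> sum \<alpha> {1..m} \<noteq> 0 \<and> diag_rank_one {1..m} (lift a m) \<alpha>)
      \<longleftrightarrow> ((\<forall>i\<in>{1..m}. \<alpha> i \<noteq> 0) \<and> ?formula \<and> ?signs)"
  proof
    assume "(\<forall>i\<in>{1..m}. \<alpha> i \<noteq> 0) \<and> sum \<alpha> {1..m} \<noteq> 0 \<and> diag_rank_one {1..m} (lift a m) \<alpha>"
    then have nz: "\<forall>i\<in>{1..m}. \<alpha> i \<noteq> 0" and S: "sum \<alpha> {1..m} \<noteq> 0"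
      and G: "diag_rank_one {1..m} (lift a m) \<alpha>" by simp_all
    have ?formula using G diag_rank_one_lift_iff[OF m S sym] by simp
    moreover have ?signs by (rule laplacian_form.diag_rank_one_signs[OF L G nz S])
    ultimately show "(\<forall>i\<in>{1..m}. \<alpha> i \<noteq> 0) \<and> ?formula \<and> ?signs" using nz by simp
  next
    assume "(\<forall>i\<in>{1..m}. \<alpha> i \<noteq> 0) \<and> ?formula \<and> ?signs"
    then have nz: "\<forall>i\<in>{1..m}. \<alpha> i \<noteq> 0" and formula: ?formula and signs: ?signs by simp_all
    have "sum \<alpha> {1..m} \<noteq> 0" using signs by (rule S)
    moreover from this have "diag_rank_one {1..m} (lift a m) \<alpha>"
      using formula diag_rank_one_lift_iff[OF m _ sym] by simp
    ultimately show "(\<forall>i\<in>{1..m}. \<alpha> i \<noteq> 0) \<and> sum \<alpha> {1..m} \<noteq> 0 \<and> diag_rank_one {1..m} (lift a m) \<alpha>"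
      using nz by simp
  qed
qed

section \<open>Naturally reductive complements\<close>

context compact_simple_lie
begin

lemma h_invariant_P_mu: "h_invariant br m (P_mu m \<mu>)"
  unfolding h_invariant_def
proof (intro ballI)
  fix W X :: "nat \<Rightarrow> 'v" assume W: "W \<in> hset m" and X: "X \<in> P_mu m \<mu>"
  obtain Z where Z: "W = diagonal m Z" using W unfolding hset_iff_diagonal ..
  have "(\<Sum>r\<in>{1..m}. \<mu> r *\<^sub>R gbr br W X r) = (\<Sum>r\<in>{1..m}. br Z (\<mu> r *\<^sub>R X r))"
    unfolding Z gbr_def diagonal_def by (intro sum.cong) (auto simp: bracket_scaleR)
  also have "\<dots> = br Z (\<Sum>r\<in>{1..m}. \<mu> r *\<^sub>R X r)"
    by (simp add: linear_sum[OF linear_bracket_right] o_def)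
  also have "\<dots> = 0" using X unfolding P_mu_def by (simp add: bracket_zero)
  finally show "gbr br W X \<in> P_mu m \<mu>"
    using X unfolding P_mu_def gset_def gbr_def by (auto simp: bracket_zero)
qed

definition reductivity_form :: "(nat \<Rightarrow> nat \<Rightarrow> real) \<Rightarrow> nat \<Rightarrow> (nat \<Rightarrow> 'v) \<Rightarrow> (nat \<Rightarrow> 'v) \<Rightarrow> real" where
  "reductivity_form G m X Y = (\<Sum>p\<in>{1..m}. \<Sum>q\<in>{1..m}. G p q * kform (br (X p) (Y p)) (X q))"

lemma Qform_proj_p_bracket:
  assumes m: "m \<ge> 1" and P: "is_complement_h m P" and X: "X \<in> P" and Y: "Y \<in> P"
  shows "Qform br a m (proj_gm m (proj_p m P (gbr br X Y))) (proj_gm m X)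
    = reductivity_form (lift a m) m X Y"
proof -
  define k where "k p q = kform (br (X p) (Y p)) (X q)" for p q
  have "P \<subseteq> gset m" using P unfolding is_complement_h_def is_subspace_g_def by blast
  then have "gbr br X Y \<in> gset m"
    using X Y unfolding gset_def gbr_def by (auto simp: bracket_zero)
  then have eq: "proj_gm m (proj_p m P (gbr br X Y)) = proj_gm m (gbr br X Y)"
    by (intro proj_gm_eq_if_diff_in_hset[OF m] proj_p_decomp[OF P])
  have "Qform br a m (proj_gm m (proj_p m P (gbr br X Y))) (proj_gm m X)
      = (\<Sum>i\<in>{1..<m}. \<Sum>j\<in>{1..<m}. a i j * kform (br (X i) (Y i) - br (X m) (Y m)) (X j - X m))"
    unfolding eq unfolding Qform_def proj_gm_def gbr_def kform_def by (intro sum.cong refl) auto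
  also have "\<dots> = (\<Sum>i\<in>{1..<m}. \<Sum>j\<in>{1..<m}. a i j * (k i j - k i m - k m j + k m m))"
    by (simp add: k_def kform_diff_diff)
  also have "\<dots> = reductivity_form (lift a m) m X Y"
    unfolding reductivity_form_def k_def[symmetric] by (rule lift_double_sum[OF m])
  finally show ?thesis .
qed

lemma naturally_reductive_iff_reductivity_form:
  assumes "m \<ge> 1"
  shows "naturally_reductive br a m \<longleftrightarrow> (\<exists>P. is_complement_h m P \<and> h_invariant br m P \<and>
    (\<forall>X\<in>P. \<forall>Y\<in>P. reductivity_form (lift a m) m X Y = 0))"
  unfolding naturally_reductive_def using Qform_proj_p_bracket[OF assms] by (metis (no_types, lifting))

lemma naturally_reductive_if_P_mu:
  assumes m: "m \<ge> 1" and S: "sum \<mu> {1..m} \<noteq> 0"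
    and H: "\<And>X Y. X \<in> P_mu m \<mu> \<Longrightarrow> reductivity_form (lift a m) m X Y = 0"
  shows "naturally_reductive br a m"
  unfolding naturally_reductive_iff_reductivity_form[OF m]
  using is_complement_h_P_mu[OF S] h_invariant_P_mu H by blast

lemma reductivity_form_star_shaped:
  assumes k: "star_shaped {1..m} G k" and X: "X k = 0"
  shows "reductivity_form G m X Y = 0"
  unfolding reductivity_form_def
proof (intro sum.neutral ballI)
  fix p q assume pq: "p \<in> {1..m}" "q \<in> {1..m}"
  consider "p = q" | "p = k" | "q = k" | "p \<noteq> q" "p \<noteq> k" "q \<noteq> k" by blast
  then show "G p q * kform (br (X p) (Y p)) (X q) = 0"
  proof cases
    case 1 then show ?thesis by (simp add: kform_bracket_self)
  next
    case 2 then show ?thesis using X by (simp add: bracket_zero bilinear_lzero[OF kform_bilinear])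
  next
    case 3 then show ?thesis using X by (simp add: bilinear_rzero[OF kform_bilinear])
  next
    case 4 then show ?thesis using k pq unfolding star_shaped_def by simp
  qed
qed

lemma naturally_reductive_if_star_shaped:
  assumes m: "m \<ge> 1" and k: "k \<in> {1..m}" "star_shaped {1..m} (lift a m) k"
  shows "naturally_reductive br a m"
proof (rule naturally_reductive_if_P_mu[OF m])
  show "sum (unit_vec k) {1..m} \<noteq> 0" using k by (simp add: unit_vec_def)
  fix X Y :: "nat \<Rightarrow> 'v" assume X: "X \<in> P_mu m (unit_vec k)"
  have "X k = (\<Sum>r\<in>{1..m}. if r = k then X r else 0)" using k by simp
  also have "\<dots> = (\<Sum>r\<in>{1..m}. unit_vec k r *\<^sub>R X r)"
    by (intro sum.cong) (auto simp: unit_vec_def)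
  finally have "X k = 0" using X unfolding P_mu_def by simp
  then show "reductivity_form (lift a m) m X Y = 0"
    by (rule reductivity_form_star_shaped[OF k(2)])
qed

lemma reductivity_form_diag_rank_one:
  assumes G: "diag_rank_one {1..m} G \<alpha>" and X: "X \<in> P_mu m \<alpha>"
  shows "reductivity_form G m X Y = 0"
proof -
  define k where "k p q = kform (br (X p) (Y p)) (X q)" for p q
  have row: "(\<Sum>q\<in>{1..m}. \<alpha> q * k p q) = 0" for p
  proof -
    have lin: "linear (kform (br (X p) (Y p)))" using kform_bilinear unfolding bilinear_def by blast
    have "(\<Sum>q\<in>{1..m}. \<alpha> q * k p q) = kform (br (X p) (Y p)) (\<Sum>q\<in>{1..m}. \<alpha> q *\<^sub>R X q)"
      unfolding k_def using lin by (simp add: linear_sum linear_scale o_def)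
    then show ?thesis using X unfolding P_mu_def by (simp add: bilinear_rzero[OF kform_bilinear])
  qed
  have "(\<Sum>q\<in>{1..m}. G p q * k p q) = 0" if p: "p \<in> {1..m}" for p
  proof -
    have "(\<Sum>q\<in>{1..m}. G p q * k p q)
        = (\<Sum>q\<in>{1..m}. (if q = p then \<alpha> p * k p q else 0) - \<alpha> p * (\<alpha> q * k p q) / sum \<alpha> {1..m})"
    proof (rule sum.cong[OF refl])
      fix q assume q: "q \<in> {1..m}"
      have "G p q = (if p = q then \<alpha> p else 0) - \<alpha> p * \<alpha> q / sum \<alpha> {1..m}"
        using G p q unfolding diag_rank_one_def by blast
      then show "G p q * k p q
          = (if q = p then \<alpha> p * k p q else 0) - \<alpha> p * (\<alpha> q * k p q) / sum \<alpha> {1..m}"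
        by (cases "p = q") (simp_all add: left_diff_distrib mult.assoc)
    qed
    also have "\<dots> = \<alpha> p * k p p - \<alpha> p * (\<Sum>q\<in>{1..m}. \<alpha> q * k p q) / sum \<alpha> {1..m}"
      using p by (simp add: sum_subtractf sum_divide_distrib[symmetric] sum_distrib_left)
    also have "\<dots> = \<alpha> p * k p p" unfolding row by simp
    also have "\<dots> = 0" by (simp add: k_def kform_bracket_self)
    finally show ?thesis .
  qed
  then show ?thesis unfolding reductivity_form_def k_def[symmetric] by (intro sum.neutral) auto
qed

lemma naturally_reductive_if_diag_rank_one:
  assumes m: "m \<ge> 1" and S: "sum \<alpha> {1..m} \<noteq> 0" and G: "diag_rank_one {1..m} (lift a m) \<alpha>"
  shows "naturally_reductive br a m"
  using naturally_reductive_if_P_mu[OF m S] reductivity_form_diag_rank_one[OF G] by blast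

text \<open>Projecting \<open>e\<^sub>i \<otimes> Z\<close> to an invariant complement \<open>P\<close> along \<open>h\<close> adds the diagonal
  element \<open>1 \<otimes> \<phi>\<^sub>i Z\<close>; Schur's lemma makes every \<open>\<phi>\<^sub>i\<close> a scalar.\<close>

definition phi :: "nat \<Rightarrow> (nat \<Rightarrow> 'v) set \<Rightarrow> nat \<Rightarrow> 'v \<Rightarrow> 'v" where
  "phi m P i Z = proj_p m P (tensor m (unit_vec i) Z) m"

lemma tensor_unit_vec_in_gset: "tensor m (unit_vec i) Z \<in> gset m"
  unfolding tensor_def gset_def by simp

lemma phi_eqI:
  assumes P: "is_complement_h m P" and i: "i \<in> {1..<m}"
    and W: "(\<lambda>r. tensor m (unit_vec i) Z r + diagonal m W r) \<in> P"
  shows "phi m P i Z = W"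
proof -
  have "(\<lambda>r. tensor m (unit_vec i) Z r - (tensor m (unit_vec i) Z r + diagonal m W r)) = diagonal m (- W)"
    by (simp add: fun_eq_iff diagonal_def)
  then have "(\<lambda>r. tensor m (unit_vec i) Z r - (tensor m (unit_vec i) Z r + diagonal m W r)) \<in> hset m"
    unfolding hset_iff_diagonal by (rule exI)
  then have "proj_p m P (tensor m (unit_vec i) Z) = (\<lambda>r. tensor m (unit_vec i) Z r + diagonal m W r)"
    by (rule proj_p_eqI[OF P W])
  then show ?thesis using i unfolding phi_def by (simp add: tensor_def unit_vec_def diagonal_def)
qed

lemma phi_representative:
  assumes P: "is_complement_h m P" and i: "i \<in> {1..<m}"
  shows "(\<lambda>r. tensor m (unit_vec i) Z r + diagonal m (phi m P i Z) r) \<in> P"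
proof -
  let ?V = "tensor m (unit_vec i) Z"
  obtain W where W: "(\<lambda>r. ?V r - proj_p m P ?V r) = diagonal m W"
    using proj_p_decomp(2)[OF P tensor_unit_vec_in_gset] unfolding hset_iff_diagonal ..
  have "W = - phi m P i Z"
    using fun_cong[OF W, of m] i unfolding phi_def by (simp add: tensor_def unit_vec_def diagonal_def)
  then have "proj_p m P ?V = (\<lambda>r. ?V r + diagonal m (phi m P i Z) r)"
    using W by (simp add: fun_eq_iff diagonal_def algebra_simps)
  moreover have "proj_p m P ?V \<in> P" by (rule proj_p_decomp(1)[OF P tensor_unit_vec_in_gset])
  ultimately show ?thesis by simp
qed

lemma phi_linear:
  assumes P: "is_complement_h m P" and i: "i \<in> {1..<m}"
  shows "linear (phi m P i)"
proof (rule linearI)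
  have add: "\<And>X Y. X \<in> P \<Longrightarrow> Y \<in> P \<Longrightarrow> (\<lambda>r. X r + Y r) \<in> P"
    and scale: "\<And>c X. X \<in> P \<Longrightarrow> (\<lambda>r. c *\<^sub>R X r) \<in> P"
    using P unfolding is_complement_h_def is_subspace_g_def by auto
  note rep = phi_representative[OF P i]
  fix Z1 Z2 :: 'v and c :: real
  have "(\<lambda>r. tensor m (unit_vec i) (Z1 + Z2) r + diagonal m (phi m P i Z1 + phi m P i Z2) r)
      = (\<lambda>r. (tensor m (unit_vec i) Z1 r + diagonal m (phi m P i Z1) r)
           + (tensor m (unit_vec i) Z2 r + diagonal m (phi m P i Z2) r))"
    by (simp add: fun_eq_iff tensor_def diagonal_def scaleR_add_right)
  then show "phi m P i (Z1 + Z2) = phi m P i Z1 + phi m P i Z2"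
    using add[OF rep rep] by (intro phi_eqI[OF P i]) simp
  have "(\<lambda>r. tensor m (unit_vec i) (c *\<^sub>R Z1) r + diagonal m (c *\<^sub>R phi m P i Z1) r)
      = (\<lambda>r. c *\<^sub>R (tensor m (unit_vec i) Z1 r + diagonal m (phi m P i Z1) r))"
    by (simp add: fun_eq_iff tensor_def diagonal_def scaleR_add_right)
  then show "phi m P i (c *\<^sub>R Z1) = c *\<^sub>R phi m P i Z1"
    using scale[OF rep] by (intro phi_eqI[OF P i]) simp
qed

lemma phi_equivariant:
  assumes P: "is_complement_h m P" and inv: "h_invariant br m P" and i: "i \<in> {1..<m}"
  shows "phi m P i (br W Z) = br W (phi m P i Z)"
proof (rule phi_eqI[OF P i])
  have "diagonal m W \<in> hset m" unfolding hset_iff_diagonal by blast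
  then have "gbr br (diagonal m W) (\<lambda>r. tensor m (unit_vec i) Z r + diagonal m (phi m P i Z) r) \<in> P"
    using inv phi_representative[OF P i] unfolding h_invariant_def by blast
  moreover have "gbr br (diagonal m W) (\<lambda>r. tensor m (unit_vec i) Z r + diagonal m (phi m P i Z) r)
      = (\<lambda>r. tensor m (unit_vec i) (br W Z) r + diagonal m (br W (phi m P i Z)) r)"
    by (simp add: fun_eq_iff gbr_def tensor_def diagonal_def bracket_add bracket_scaleR bracket_zero)
  ultimately show "(\<lambda>r. tensor m (unit_vec i) (br W Z) r + diagonal m (br W (phi m P i Z)) r) \<in> P"
    by simp
qed

lemma tensor_in_complement:
  assumes P: "is_complement_h m P" and c: "\<And>i Z. i \<in> {1..<m} \<Longrightarrow> phi m P i Z = c i *\<^sub>R Z"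
    and xm: "(\<Sum>i\<in>{1..<m}. (x i - x m) * c i) = x m"
  shows "tensor m x Z \<in> P"
proof -
  have sub: "is_subspace_g m P" using P unfolding is_complement_h_def by blast
  then have scale: "\<And>c X. X \<in> P \<Longrightarrow> (\<lambda>r. c *\<^sub>R X r) \<in> P"
    unfolding is_subspace_g_def by blast
  have "tensor m x Z = tensor m (\<lambda>r. \<Sum>i\<in>{1..<m}. (x i - x m) * (unit_vec i r + c i)) Z"
    using coordinates_from_differences[OF _ xm] by (intro tensor_cong) simp
  also have "\<dots> = (\<lambda>r. \<Sum>i\<in>{1..<m}. (x i - x m) *\<^sub>R
      (tensor m (unit_vec i) Z r + diagonal m (phi m P i Z) r))"
    unfolding tensor_sum
    by (intro ext sum.cong refl)
      (auto simp: tensor_def diagonal_def c scaleR_add_right scaleR_add_left distrib_left)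
  also have "\<dots> \<in> P"
    using sub scale[OF phi_representative[OF P]] by (intro is_subspace_g_sum) auto
  finally show ?thesis .
qed

lemma invariant_complement_contains_tensors:
  assumes m: "m \<ge> 2" and P: "is_complement_h m P" and inv: "h_invariant br m P"
  obtains \<mu> where "sum \<mu> {1..m} \<noteq> 0"
    and "\<And>x Z. (\<Sum>r\<in>{1..m}. \<mu> r * x r) = 0 \<Longrightarrow> tensor m x Z \<in> P"
proof -
  have "\<forall>i\<in>{1..<m}. \<exists>c. \<forall>Z. phi m P i Z = c *\<^sub>R Z"
    using equivariant_map_is_scalar[OF phi_linear[OF P] phi_equivariant[OF P inv]] by blast
  then obtain c where c: "\<And>i Z. i \<in> {1..<m} \<Longrightarrow> phi m P i Z = c i *\<^sub>R Z" by metis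
  text \<open>The condition \<open>x\<^sub>m = \<Sigma> c\<^sub>i (x\<^sub>i - x\<^sub>m)\<close> of \<open>tensor_in_complement\<close> as a weighted sum.\<close>
  define \<mu> where "\<mu> r = (if r = m then - (1 + (\<Sum>i\<in>{1..<m}. c i)) else c r)" for r
  have I: "{1..m} = insert m {1..<m}" using m by auto
  have weighted: "(\<Sum>r\<in>{1..m}. \<mu> r * x r) = (\<Sum>i\<in>{1..<m}. (x i - x m) * c i) - x m" for x
  proof -
    have "(\<Sum>r\<in>{1..m}. \<mu> r * x r) = \<mu> m * x m + (\<Sum>r\<in>{1..<m}. \<mu> r * x r)"
      unfolding I by simp
    moreover have "(\<Sum>r\<in>{1..<m}. \<mu> r * x r) = (\<Sum>i\<in>{1..<m}. c i * x i)"
      by (rule sum.cong) (auto simp: \<mu>_def)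
    moreover have "\<mu> m * x m = - x m - (\<Sum>i\<in>{1..<m}. c i) * x m"
      by (simp add: \<mu>_def left_diff_distrib)
    moreover have "(\<Sum>i\<in>{1..<m}. (x i - x m) * c i) = (\<Sum>i\<in>{1..<m}. c i * x i - c i * x m)"
      by (rule sum.cong) (simp_all add: algebra_simps)
    moreover have "\<dots> = (\<Sum>i\<in>{1..<m}. c i * x i) - (\<Sum>i\<in>{1..<m}. c i) * x m"
      by (simp add: sum_subtractf sum_distrib_right)
    ultimately show ?thesis by linarith
  qed
  have "tensor m x Z \<in> P" if "(\<Sum>r\<in>{1..m}. \<mu> r * x r) = 0" for x Z
  proof (rule tensor_in_complement[OF P c])
    show "(\<Sum>i\<in>{1..<m}. (x i - x m) * c i) = x m" using that weighted[of x] by linarith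
  qed
  moreover have "sum \<mu> {1..m} \<noteq> 0" using weighted[of "\<lambda>_. 1"] by simp
  ultimately show ?thesis using that by blast
qed

lemma reductivity_form_tensors:
  "reductivity_form G m (\<lambda>r. tensor m u A r + tensor m v A' r) (tensor m w B)
    = kform (br A B) A' * (tri_form G {1..m} u w v - tri_form G {1..m} v w u)"
proof -
  have "kform (br (tensor m u A p + tensor m v A' p) (tensor m w B p)) (tensor m u A q + tensor m v A' q)
      = kform (br A B) A' * (u p * w p * v q - v p * w p * u q)" if "p \<in> {1..m}" "q \<in> {1..m}" for p q
    using that kform_bracket_combination[of "u p * w p" A B "v p * w p" A' "u q" "v q"]
    by (simp add: tensor_def bracket_add bracket_scaleR algebra_simps)
  then have "reductivity_form G m (\<lambda>r. tensor m u A r + tensor m v A' r) (tensor m w B)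
      = (\<Sum>p\<in>{1..m}. \<Sum>q\<in>{1..m}. G p q * (kform (br A B) A' * (u p * w p * v q - v p * w p * u q)))"
    unfolding reductivity_form_def by (intro sum.cong refl) simp
  also have "\<dots> = kform (br A B) A' * (tri_form G {1..m} u w v - tri_form G {1..m} v w u)"
    unfolding tri_form_def by (simp add: sum_distrib_left right_diff_distrib sum_subtractf mult_ac)
  finally show ?thesis .
qed

lemma naturally_reductive_imp_tensor_symmetric:
  assumes m: "m \<ge> 2" and nr: "naturally_reductive br a m"
  obtains \<mu> where "sum \<mu> {1..m} \<noteq> 0"
    and "\<And>u w v. (\<Sum>r\<in>{1..m}. \<mu> r * u r) = 0 \<Longrightarrow> (\<Sum>r\<in>{1..m}. \<mu> r * w r) = 0 \<Longrightarrow>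
           (\<Sum>r\<in>{1..m}. \<mu> r * v r) = 0 \<Longrightarrow>
           tri_form (lift a m) {1..m} u w v = tri_form (lift a m) {1..m} v w u"
proof -
  obtain P where P: "is_complement_h m P" and inv: "h_invariant br m P"
    and H: "\<forall>X\<in>P. \<forall>Y\<in>P. reductivity_form (lift a m) m X Y = 0"
    using nr m naturally_reductive_iff_reductivity_form[of m a] by auto
  obtain \<mu> where S: "sum \<mu> {1..m} \<noteq> 0"
    and tensors: "\<And>x Z. (\<Sum>r\<in>{1..m}. \<mu> r * x r) = 0 \<Longrightarrow> tensor m x Z \<in> P"
    using invariant_complement_contains_tensors[OF m P inv] by blast
  have add: "\<And>X Y. X \<in> P \<Longrightarrow> Y \<in> P \<Longrightarrow> (\<lambda>r. X r + Y r) \<in> P"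
    using P unfolding is_complement_h_def is_subspace_g_def by blast
  obtain A B where AB: "br A B \<noteq> 0" using nonabelian by blast
  have "tri_form (lift a m) {1..m} u w v = tri_form (lift a m) {1..m} v w u"
    if "(\<Sum>r\<in>{1..m}. \<mu> r * u r) = 0" "(\<Sum>r\<in>{1..m}. \<mu> r * w r) = 0" "(\<Sum>r\<in>{1..m}. \<mu> r * v r) = 0"
    for u w v
  proof -
    have "reductivity_form (lift a m) m (\<lambda>r. tensor m u A r + tensor m v (br A B) r) (tensor m w B) = 0"
      using H add tensors that by blast
    then have "kform (br A B) (br A B) * (tri_form (lift a m) {1..m} u w v - tri_form (lift a m) {1..m} v w u) = 0"
      unfolding reductivity_form_tensors .
    then show ?thesis using kform_pos[OF AB] by simp
  qed
  with S show ?thesis using that by blast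
qed

lemma naturally_reductive_iff_normal_form:
  assumes m: "m \<ge> 2"
    and sym: "\<forall>i\<in>{1..<m}. \<forall>j\<in>{1..<m}. a i j = a j i"
    and L: "laplacian_form {1..m} (lift a m)"
  shows "naturally_reductive br a m \<longleftrightarrow>
    (\<exists>k\<in>{1..m}. star_shaped {1..m} (lift a m) k)
    \<or> (\<exists>\<alpha>. (\<forall>i\<in>{1..m}. \<alpha> i \<noteq> 0) \<and> sum \<alpha> {1..m} \<noteq> 0 \<and> diag_rank_one {1..m} (lift a m) \<alpha>)"
    (is "_ \<longleftrightarrow> ?normal_form")
proof
  assume "naturally_reductive br a m"
  then obtain \<mu> where "sum \<mu> {1..m} \<noteq> 0"
    and "\<And>u w v. (\<Sum>r\<in>{1..m}. \<mu> r * u r) = 0 \<Longrightarrow> (\<Sum>r\<in>{1..m}. \<mu> r * w r) = 0 \<Longrightarrow>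
           (\<Sum>r\<in>{1..m}. \<mu> r * v r) = 0 \<Longrightarrow>
           tri_form (lift a m) {1..m} u w v = tri_form (lift a m) {1..m} v w u"
    by (rule naturally_reductive_imp_tensor_symmetric[OF m]) (rule that)
  then interpret tensor_symmetric "{1..m}" "lift a m" \<mu>
    by (intro tensor_symmetric.intro[OF L] tensor_symmetric_axioms.intro)
  show ?normal_form by (rule classification)
next
  have "m \<ge> 1" using m by simp
  then show "?normal_form \<Longrightarrow> naturally_reductive br a m"
    using naturally_reductive_if_star_shaped naturally_reductive_if_diag_rank_one by blast
qed
end

theorem mainTheorem2:
  fixes br :: "'v::euclidean_space \<Rightarrow> 'v \<Rightarrow> 'v"
    and a :: "nat \<Rightarrow> nat \<Rightarrow> real"
    and m :: nat
  assumes "compact_simple_lie_algebra br"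
    and "m \<ge> 2"
    and "\<forall>i\<in>{1..<m}. \<forall>j\<in>{1..<m}. a i j = a j i"
    and "\<forall>x :: nat \<Rightarrow> real. (\<exists>i\<in>{1..<m}. x i \<noteq> 0) \<longrightarrow>
           (\<Sum>i\<in>{1..<m}. \<Sum>j\<in>{1..<m}. a i j * x i * x j) > 0"
  shows "naturally_reductive br a m \<longleftrightarrow>
    ((\<forall>i\<in>{1..<m}. a i i > 0) \<and> (\<forall>i\<in>{1..<m}. \<forall>j\<in>{1..<m}. i \<noteq> j \<longrightarrow> a i j = 0))
    \<or> (\<exists>k\<in>{1..<m}. (\<forall>i\<in>{1..<m}. i \<noteq> k \<longrightarrow> - a i k = a i i \<and> a i i > 0)
          \<and> (\<forall>i\<in>{1..<m}. \<forall>j\<in>{1..<m}. i \<noteq> j \<and> i \<noteq> k \<and> j \<noteq> k \<longrightarrow> a i j = 0)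
          \<and> a k k > (\<Sum>i\<in>{1..<m} - {k}. a i i))
    \<or> (\<exists>\<alpha> :: nat \<Rightarrow> real. (\<forall>i\<in>{1..m}. \<alpha> i \<noteq> 0)
          \<and> (\<forall>i\<in>{1..<m}. \<forall>j\<in>{1..<m}.
                a i j = (if i = j then \<alpha> i else 0) - \<alpha> i * \<alpha> j / (\<Sum>l\<in>{1..m}. \<alpha> l))
          \<and> ((\<forall>i\<in>{1..m}. \<alpha> i > 0)
             \<or> ((\<exists>!i. i \<in> {1..m} \<and> \<alpha> i < 0) \<and> (\<Sum>l\<in>{1..m}. \<alpha> l) < 0)))"
proof -
  interpret compact_simple_lie br by unfold_locales (rule assms(1))
  have m: "m \<ge> 1" using assms(2) by simp
  have L: "laplacian_form {1..m} (lift a m)" by (rule laplacian_form_lift[OF assms(2-4)])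
  have "{1..m} = insert m {1..<m}" using m by auto
  then have "(\<exists>k\<in>{1..m}. star_shaped {1..m} (lift a m) k)
      \<longleftrightarrow> star_shaped {1..m} (lift a m) m \<or> (\<exists>k\<in>{1..<m}. star_shaped {1..m} (lift a m) k)"
    by simp
  then show ?thesis
    unfolding naturally_reductive_iff_normal_form[OF assms(2,3) L] star_shaped_lift_last_iff_diagonal[OF L]
      ex_star_shaped_lift_iff[OF L m assms(3)] ex_diag_rank_one_lift_iff[OF L m assms(3)]
    by (simp only: disj_assoc)
qed

end
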